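(* Assume the standing hypotheses of the context and let $\varepsilon\in(0,\varepsilon_0]$. Any sequence $(\boldsymbol\rho^n)=(\rho_1^n,\rho_2^n)\subset\mathfrak X_0$ with $\mathcal E_\varepsilon(\boldsymbol\rho^n)$ uniformly bounded has a subsequence converging weakly in $L^1(\mathbb R^d)$ (componentwise) to some $\boldsymbol\rho\in\mathfrak X_0$. The same holds for sequences $(\boldsymbol\rho^n)\subset\mathcal P_2(\mathbb R^d)^2$ with $\mathcal E_\varepsilon(\boldsymbol\rho^n)$ uniformly bounded and $\mathfrak m_1[\rho_1^n]+\mathfrak m_1[\rho_2^n]\to0$.
   Context: Let $d\ge1$. Standing hypotheses. (K): $K:\mathbb R^d\to[0,\infty)$ radially symmetric, $K(0)=0$, $K\in C^2$, $\nabla^2K\ge\lambda\,\mathrm{Id}$ for some $\lambda>0$, $\|\nabla^2K\|\le C_K$. (F): for $j=1,2$, $F_j:[0,\infty)\to[0,\infty)$ is $C^2$, $F_j''>0$ on $(0,\infty)$, $F_j(0)=F_j'(0)=0$, $\liminf_{r\to\infty}F_j''(r)>0$, $\limsup_{r\to\infty}F_j'(r)/F_j(r)<\infty$; there are $m_j,M_j>0,\beta_j\ge0,r_0>0$ with $m_jr^{\beta_j}\le F_j''(r)\le M_jr^{\beta_j}$ on $[0,r_0]$; $F_j(r)-rF_j'(r)+r^2F_j''(r)\ge0$. (h): $h:[0,\infty)^2\to\mathbb R$ is $C^2$, $h$ and $\nabla h$ vanish on $\{r_1=0\}\cup\{r_2=0\}$. ($\theta$): with $\theta_{j,i}(\mathbf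 u)=\partial_{r_i}\partial_{r_j}h(\mathbf r)/F_i''(r_i)$, $r_k=(F_k')^{-1}(u_k)$, each $\theta_{j,i}$ is locally Lipschitz on $[0,\infty)^2$ and $|\theta_{j,i}(\mathbf u)|\le\kappa_{j,i}\min\{1,u_1,u_2,\sqrt{(F_i')^{-1}(u_i)/(F_j')^{-1}(u_j)}\}$ for constants $\kappa_{j,i}>0$. Notation: $\mathcal P_2(\mathbb R^d)$ probability measures with finite second moment (absolutely continuous ones identified with densities); $\mathfrak m_1[\rho]=\int x\rho$; $\mathfrak X_0=\{\boldsymbol\rho\in\mathcal P_2(\mathbb R^d)^2:\mathfrak m_1[\rho_1]+\mathfrak m_1[\rho_2]=0\}$; $\mathcal E_\varepsilon(\boldsymbol\rho)=\int[F_1(\rho_1)+F_2(\rho_2)+\varepsilon h(\rho_1,\rho_2)+\rho_1K*\rho_2]dx$, $=+\infty$ unless both components are absolutely continuous with integrand in $L^1$. $\varepsilon_0>0$ is a number such that $\mathbf r\mapsto F_1(r_1)+F_2(r_2)+2\varepsilon_0h(\mathbf r)$ is convex on $[0,\infty)^2$. *)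

theory Defs
  imports "HOL-Analysis.Analysis"
begin

text \<open>Densities on R^d (d = DIM('a)) w.r.t. Lebesgue measure.\<close>

definition P2_density :: "('a::euclidean_space \<Rightarrow> real) \<Rightarrow> bool" where
  "P2_density f \<longleftrightarrow> f \<in> borel_measurable lborel \<and> (\<forall>x. 0 \<le> f x) \<and>
     integrable lborel f \<and> (LINT x|lborel. f x) = 1 \<and>
     integrable lborel (\<lambda>x. (norm x)\<^sup>2 * f x)"

definition moment1 :: "('a::euclidean_space \<Rightarrow> real) \<Rightarrow> 'a" where
  "moment1 f = (LINT x|lborel. f x *\<^sub>R x)"

definition X0 :: "('a::euclidean_space \<Rightarrow> real) \<Rightarrow> ('a \<Rightarrow> real) \<Rightarrow> bool" where
  "X0 f g \<longleftrightarrow> P2_density f \<and> P2_density g \<and> moment1 f + moment1 g = 0"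

definition conv :: "('a::euclidean_space \<Rightarrow> real) \<Rightarrow> ('a \<Rightarrow> real) \<Rightarrow> 'a \<Rightarrow> real" where
  "conv K f x = (LINT y|lborel. K (x - y) * f y)"

definition energy ::
  "real \<Rightarrow> (real \<Rightarrow> real) \<Rightarrow> (real \<Rightarrow> real) \<Rightarrow> (real \<times> real \<Rightarrow> real) \<Rightarrow>
   ('a::euclidean_space \<Rightarrow> real) \<Rightarrow> ('a \<Rightarrow> real) \<Rightarrow> ('a \<Rightarrow> real) \<Rightarrow> ereal" where
  "energy \<epsilon> F1 F2 h K f g =
     (let e = (\<lambda>x. F1 (f x) + F2 (g x) + \<epsilon> * h (f x, g x) + f x * conv K g x)
      in if integrable lborel e then ereal (LINT x|lborel. e x) else \<infinity>)"

definition weak_L1_conv :: "(nat \<Rightarrow> 'a::euclidean_space \<Rightarrow> real) \<Rightarrow> ('a \<Rightarrow> real) \<Rightarrow> bool" where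
  "weak_L1_conv fs f \<longleftrightarrow> integrable lborel f \<and> (\<forall>n. integrable lborel (fs n)) \<and>
     (\<forall>g. g \<in> borel_measurable lborel \<and> bounded (range g) \<longrightarrow>
        (\<lambda>n. LINT x|lborel. fs n x * g x) \<longlonglongrightarrow> (LINT x|lborel. f x * g x))"

definition hypF :: "(real \<Rightarrow> real) \<Rightarrow> (real \<Rightarrow> real) \<Rightarrow> (real \<Rightarrow> real) \<Rightarrow> bool" where
  "hypF F F' F'' \<longleftrightarrow>
     (\<forall>r\<ge>0. 0 \<le> F r) \<and>
     (\<forall>r\<ge>0. (F has_real_derivative F' r) (at r within {0..})) \<and>
     (\<forall>r\<ge>0. (F' has_real_derivative F'' r) (at r within {0..})) \<and>
     continuous_on {0..} F'' \<and>
     (\<forall>r>0. F'' r > 0) \<and> F 0 = 0 \<and> F' 0 = 0 \<and>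
     Liminf at_top (\<lambda>r. ereal (F'' r)) > 0 \<and>
     Limsup at_top (\<lambda>r. ereal (F' r / F r)) < \<infinity> \<and>
     (\<exists>m M \<beta> r0. m > 0 \<and> M > 0 \<and> \<beta> \<ge> 0 \<and> r0 > 0 \<and>
        (\<forall>r. 0 \<le> r \<and> r \<le> r0 \<longrightarrow>
           m * (if r = 0 then (if \<beta> = 0 then 1 else 0) else r powr \<beta>) \<le> F'' r \<and>
           F'' r \<le> M * (if r = 0 then (if \<beta> = 0 then 1 else 0) else r powr \<beta>))) \<and>
     (\<forall>r\<ge>0. F r - r * F' r + r\<^sup>2 * F'' r \<ge> 0)"

definition quadrant :: "(real \<times> real) set" where
  "quadrant = {0..} \<times> {0..}"

definition invd :: "(real \<Rightarrow> real) \<Rightarrow> real \<Rightarrow> real" where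
  "invd F' u = the_inv_into {0..} F' u"

definition loc_lipschitz_quadrant :: "(real \<times> real \<Rightarrow> real) \<Rightarrow> bool" where
  "loc_lipschitz_quadrant f \<longleftrightarrow>
     (\<forall>p\<in>quadrant. \<exists>e>0. \<exists>L. L-lipschitz_on (cball p e \<inter> quadrant) f)"

text \<open>Hypothesis (theta) for theta_{j,i}: hij = d_{r_i} d_{r_j} h, Fi'' the second derivative
  of F_i, and Fi', Fj' the first derivatives of F_i, F_j; ui/uj select the coordinates.\<close>
definition theta_fun ::
  "(real \<times> real \<Rightarrow> real) \<Rightarrow> (real \<Rightarrow> real) \<Rightarrow> (real \<Rightarrow> real) \<Rightarrow> (real \<Rightarrow> real) \<Rightarrow>
   (real \<times> real \<Rightarrow> real) \<Rightarrow> real \<times> real \<Rightarrow> real" where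
  "theta_fun hij F1' F2' Fi'' ri u =
     hij (invd F1' (fst u), invd F2' (snd u)) / Fi'' (ri (invd F1' (fst u), invd F2' (snd u)))"

definition hyp_theta ::
  "(real \<times> real \<Rightarrow> real) \<Rightarrow> (real \<Rightarrow> real) \<Rightarrow> (real \<Rightarrow> real) \<Rightarrow> (real \<Rightarrow> real) \<Rightarrow>
   (real \<times> real \<Rightarrow> real) \<Rightarrow> (real \<times> real \<Rightarrow> real) \<Rightarrow> real \<Rightarrow> bool" where
  "hyp_theta hij F1' F2' Fi'' ri rj \<kappa> \<longleftrightarrow>
     loc_lipschitz_quadrant (theta_fun hij F1' F2' Fi'' ri) \<and>
     (\<forall>u\<in>quadrant. \<bar>theta_fun hij F1' F2' Fi'' ri u\<bar> \<le>
        \<kappa> * min (min 1 (fst u)) (min (snd u)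
          (sqrt (ri (invd F1' (fst u), invd F2' (snd u)) / rj (invd F1' (fst u), invd F2' (snd u))))))"

end

(* Since K is C^2 with bounded Hessian, nonnegative and zero at 0, it lies
   between lam/2 |z|^2 and CK/2 |z|^2.  Convexity of F1 + F2 + 2 eps0 h, whose value and gradient
   vanish at the origin, makes F1 + F2 + eps h at least (F1 + F2) / 2, and each F_j grows at least
   quadratically at infinity.  The interaction term then bounds the second moments (the cross term
   m1 . m2 is controlled by |m1 + m2| after completing the square), and the internal energy bounds
   the L^2 norms.

   Probability densities with bounded L^2 norms and second moments are weakly compact in L^1: a
   diagonal subsequence has convergent masses on all rational boxes; uniform integrability
   propagates this to every Borel set by a Dynkin argument; the limiting set function is a measure
   absolutely continuous with respect to Lebesgue measure, and its Radon-Nikodym density is the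
   weak limit.  Second moments pass to the limit by monotone convergence and first moments by
   truncation, so the constraint m1 + m2 = 0 survives. *)

theory Submission
  imports Defs "HOL-Library.Diagonal_Subsequence"
begin

section \<open>Weak compactness of densities with bounded \<open>L\<^sup>2\<close> norm and second moment\<close>

definition rational_points :: "'a::euclidean_space set" where
  "rational_points = {x. \<forall>i\<in>Basis. x \<bullet> i \<in> \<rat>}"

definition rational_boxes :: "'a::euclidean_space set set" where
  "rational_boxes = (\<lambda>(a, b). box a b) ` (rational_points \<times> rational_points)"

lemma countable_rational_points: "countable (rational_points :: 'a::euclidean_space set)"
proof -
  have eq: "(rational_points :: 'a set) = (\<lambda>f. \<Sum>i\<in>Basis. f i *\<^sub>R i) ` (Basis \<rightarrow>\<^sub>E \<rat>)"
  proof
    show "(rational_points :: 'a set) \<subseteq> (\<lambda>f. \<Sum>i\<in>Basis. f i *\<^sub>R i) ` (Basis \<rightarrow>\<^sub>E \<rat>)"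
    proof
      fix x :: 'a assume "x \<in> rational_points"
      then have "restrict (\<lambda>i. x \<bullet> i) Basis \<in> Basis \<rightarrow>\<^sub>E \<rat>" by (auto simp: rational_points_def)
      moreover have "x = (\<Sum>i\<in>Basis. restrict (\<lambda>i. x \<bullet> i) Basis i *\<^sub>R i)"
        by (simp add: euclidean_representation)
      ultimately show "x \<in> (\<lambda>f. \<Sum>i\<in>Basis. f i *\<^sub>R i) ` (Basis \<rightarrow>\<^sub>E \<rat>)" by blast
    qed
  qed (auto simp: rational_points_def inner_sum_left_Basis)
  show ?thesis unfolding eq by (intro countable_image countable_PiE) (auto intro: countable_rat)
qed

lemma countable_rational_boxes: "countable (rational_boxes :: 'a::euclidean_space set set)"
  unfolding rational_boxes_def using countable_rational_points by auto

lemma Int_stable_rational_boxes: "Int_stable (rational_boxes :: 'a::euclidean_space set set)"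
  unfolding Int_stable_def
proof (intro ballI)
  fix A B :: "'a set" assume "A \<in> rational_boxes" "B \<in> rational_boxes"
  then obtain a b c d where abcd: "a \<in> rational_points" "b \<in> rational_points"
      "c \<in> rational_points" "d \<in> rational_points" "A = box a b" "B = box c d"
    by (auto simp: rational_boxes_def)
  define p :: 'a where "p = (\<Sum>i\<in>Basis. max (a \<bullet> i) (c \<bullet> i) *\<^sub>R i)"
  define q :: 'a where "q = (\<Sum>i\<in>Basis. min (b \<bullet> i) (d \<bullet> i) *\<^sub>R i)"
  have "p \<in> rational_points" "q \<in> rational_points"
    using abcd by (auto simp: p_def q_def rational_points_def inner_sum_left_Basis max_def min_def)
  moreover have "A \<inter> B = box p q"
    using abcd by (auto simp: mem_box p_def q_def inner_sum_left_Basis)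
  ultimately show "A \<inter> B \<in> rational_boxes" by (auto simp: rational_boxes_def)
qed

lemma sets_borel_eq_sigma_sets_rational_boxes:
  "sets borel = sigma_sets UNIV (rational_boxes :: 'a::euclidean_space set set)"
proof -
  have eq: "borel = sigma UNIV (rational_boxes :: 'a set set)"
    unfolding rational_boxes_def
  proof (rule borel_eq_sigmaI1[OF borel_def])
    fix M :: "'a set" assume "M \<in> {S. open S}"
    then have "open M" by simp
    define a where "a f = (\<Sum>i\<in>Basis. fst (f i) *\<^sub>R i)" for f :: "'a \<Rightarrow> real \<times> real"
    define b where "b f = (\<Sum>i\<in>Basis. snd (f i) *\<^sub>R i)" for f :: "'a \<Rightarrow> real \<times> real"
    define I where "I = {f \<in> Basis \<rightarrow>\<^sub>E \<rat> \<times> \<rat>. box (a f) (b f) \<subseteq> M}"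
    have M: "M = (\<Union>f\<in>I. box (a f) (b f))"
      using open_UNION_box[OF \<open>open M\<close>] unfolding a_def b_def I_def by simp
    have "countable I"
      unfolding I_def
      by (rule countable_subset[of _ "Basis \<rightarrow>\<^sub>E \<rat> \<times> \<rat>"]) (auto intro!: countable_PiE countable_rat)
    moreover have "(\<lambda>f. box (a f) (b f)) ` I
        \<subseteq> sets (sigma UNIV ((\<lambda>(a, b). box a b) ` (rational_points \<times> rational_points)))"
    proof
      fix X assume "X \<in> (\<lambda>f. box (a f) (b f)) ` I"
      then obtain f where f: "f \<in> I" "X = box (a f) (b f)" by auto
      then have "a f \<in> rational_points" "b f \<in> rational_points"
        unfolding I_def rational_points_def a_def b_def by (auto simp: inner_sum_left_Basis PiE_def Pi_def)
      with f show "X \<in> sets (sigma UNIV ((\<lambda>(a, b). box a b) ` (rational_points \<times> rational_points)))"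
        by auto
    qed
    ultimately show "M \<in> sets (sigma UNIV ((\<lambda>(a, b). box a b) ` (rational_points \<times> rational_points)))"
      by (subst M) (rule sets.countable_UN')
  qed auto
  show ?thesis by (subst eq) (simp add: sets_measure_of)
qed

lemma diagonal_subseq_convergent:
  fixes a :: "nat \<Rightarrow> nat \<Rightarrow> real"
  assumes bounded: "\<And>k. bounded (range (a k))"
  shows "\<exists>s. strict_mono s \<and> (\<forall>k. convergent (\<lambda>n. a k (s n)))"
proof -
  define P where "P k s \<longleftrightarrow> convergent (\<lambda>n. a k (s n))" for k and s :: "nat \<Rightarrow> nat"
  interpret subseqs P
  proof
    fix k and s :: "nat \<Rightarrow> nat" assume "strict_mono s"
    have "bounded (range (\<lambda>n. a k (s n)))"
      by (rule bounded_subset[OF bounded[of k]]) auto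
    from bounded_imp_convergent_subsequence[OF this]
    obtain l r where "strict_mono r" "((\<lambda>n. a k (s n)) \<circ> r) \<longlonglongrightarrow> l" by blast
    then show "\<exists>r'. strict_mono r' \<and> P k (s \<circ> r')"
      unfolding P_def convergent_def by (auto simp: o_def)
  qed
  have "P k (diagseq \<circ> (+) (Suc k))" for k
  proof (rule diagseq_holds)
    fix r s :: "nat \<Rightarrow> nat" and n assume "strict_mono r" "P n s"
    then show "P n (s \<circ> r)" unfolding P_def
      using convergent_subseq_convergent[of "\<lambda>m. a n (s m)" r] by (simp add: o_def)
  qed
  then have "convergent (\<lambda>n. a k (diagseq (n + Suc k)))" for k
    unfolding P_def by (simp add: o_def add.commute[of _ k])
  then have "convergent (\<lambda>n. a k (diagseq n))" for k
    using convergent_ignore_initial_segment[of "\<lambda>n. a k (diagseq n)" "Suc k"] by simp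
  then show ?thesis using subseq_diagseq by blast
qed

lemma convergent_uniform_approx:
  fixes u :: "nat \<Rightarrow> real"
  assumes "\<And>e. e > 0 \<Longrightarrow> \<exists>v. convergent v \<and> (\<forall>n. \<bar>u n - v n\<bar> \<le> e)"
  shows "convergent u"
proof (rule Cauchy_convergent, rule metric_CauchyI)
  fix e :: real assume e: "e > 0"
  then obtain v where v: "convergent v" "\<And>n. \<bar>u n - v n\<bar> \<le> e / 4"
    using assms[of "e / 4"] by auto
  from metric_CauchyD[OF convergent_Cauchy[OF v(1)], of "e / 4"] e
  obtain N where N: "\<And>m n. m \<ge> N \<Longrightarrow> n \<ge> N \<Longrightarrow> dist (v m) (v n) < e / 4" by auto
  have "dist (u m) (u n) < e" if "m \<ge> N" "n \<ge> N" for m n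
    using N[OF that] v(2)[of m] v(2)[of n] e unfolding dist_real_def abs_less_iff abs_le_iff by linarith
  then show "\<exists>N. \<forall>m\<ge>N. \<forall>n\<ge>N. dist (u m) (u n) < e" by blast
qed

lemma LIMSEQ_uniform_approx:
  fixes a :: "nat \<Rightarrow> real"
  assumes b: "\<And>m. b m \<longlonglongrightarrow> c m" and ab: "\<And>m n. \<bar>a n - b m n\<bar> \<le> e m"
    and Ac: "\<And>m. \<bar>A - c m\<bar> \<le> e m" and e: "e \<longlonglongrightarrow> 0"
  shows "a \<longlonglongrightarrow> A"
proof (rule metric_LIMSEQ_I)
  fix r :: real assume r: "r > 0"
  from metric_LIMSEQ_D[OF e, of "r / 3"] r obtain m where m: "dist (e m) 0 < r / 3" by auto
  from metric_LIMSEQ_D[OF b[of m], of "r / 3"] r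
  obtain N where N: "\<And>n. n \<ge> N \<Longrightarrow> dist (b m n) (c m) < r / 3" by auto
  have "dist (a n) A < r" if "n \<ge> N" for n
    using N[OF that] m ab[of n m] Ac[of m] unfolding dist_real_def abs_less_iff abs_le_iff by linarith
  then show "\<exists>no. \<forall>n\<ge>no. dist (a n) A < r" by blast
qed

lemma integrable_mult_bounded:
  fixes g f :: "'a \<Rightarrow> real"
  assumes "integrable M f" "g \<in> borel_measurable M" "\<And>x. \<bar>g x\<bar> \<le> B"
  shows "integrable M (\<lambda>x. f x * g x)"
proof (rule Bochner_Integration.integrable_bound[of _ "\<lambda>x. B * f x"])
  show "integrable M (\<lambda>x. B * f x)" using assms(1) by simp
  show "(\<lambda>x. f x * g x) \<in> borel_measurable M" using assms by (simp add: borel_measurable_integrable)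
  show "AE x in M. norm (f x * g x) \<le> norm (B * f x)"
  proof (rule AE_I2)
    fix x
    have "\<bar>f x\<bar> * \<bar>g x\<bar> \<le> \<bar>f x\<bar> * \<bar>B\<bar>"
      using assms(3)[of x] by (intro mult_left_mono) auto
    then show "norm (f x * g x) \<le> norm (B * f x)" by (simp add: abs_mult mult.commute)
  qed
qed

lemma integrable_nonneg_le:
  fixes f g :: "'a \<Rightarrow> real"
  assumes g: "integrable M g" and f: "f \<in> borel_measurable M" "\<And>x. 0 \<le> f x" "\<And>x. f x \<le> g x"
  shows "integrable M f"
proof (rule Bochner_Integration.integrable_bound[OF g f(1)])
  have "norm (f x) \<le> norm (g x)" for x
    using f(2,3)[of x] by simp
  then show "AE x in M. norm (f x) \<le> norm (g x)" by simp
qed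

lemma integral_density_mult_diff_le:
  fixes g h f :: "'a \<Rightarrow> real"
  assumes "integrable M f" "\<And>x. 0 \<le> f x" "(LINT x|M. f x) = 1"
    "integrable M (\<lambda>x. f x * g x)" "integrable M (\<lambda>x. f x * h x)"
    "\<And>x. \<bar>g x - h x\<bar> \<le> e"
  shows "\<bar>(LINT x|M. f x * g x) - (LINT x|M. f x * h x)\<bar> \<le> e"
proof -
  have "\<bar>(LINT x|M. f x * g x) - (LINT x|M. f x * h x)\<bar> = norm (LINT x|M. f x * g x - f x * h x)"
    using assms by (simp add: Bochner_Integration.integral_diff)
  also have "\<dots> \<le> (LINT x|M. norm (f x * g x - f x * h x))" by (rule integral_norm_bound)
  also have "\<dots> \<le> (LINT x|M. e * f x)"
  proof (rule integral_mono)
    show "integrable M (\<lambda>x. norm (f x * g x - f x * h x))" using assms by auto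
    show "integrable M (\<lambda>x. e * f x)" using assms by auto
    fix x
    have "norm (f x * g x - f x * h x) = f x * \<bar>g x - h x\<bar>"
      using assms(2)[of x] by (simp add: abs_mult right_diff_distrib[symmetric])
    also have "\<dots> \<le> f x * e" using assms(2,6) by (intro mult_left_mono) auto
    finally show "norm (f x * g x - f x * h x) \<le> e * f x" by (simp add: mult.commute)
  qed
  also have "\<dots> = e" using assms by simp
  finally show ?thesis .
qed

lemma mult_indicator_le_truncation:
  fixes f t R :: real and x :: "'a::real_normed_vector"
  assumes "0 \<le> f" "t > 0" "R > 0"
  shows "f * indicator A x \<le> t * indicator (A \<inter> cball 0 R) x + f\<^sup>2 / t + (norm x)\<^sup>2 * f / R\<^sup>2"
proof -
  have nonneg: "0 \<le> f\<^sup>2 / t" "0 \<le> (norm x)\<^sup>2 * f / R\<^sup>2" "0 \<le> t * indicator (A \<inter> cball 0 R) x"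
    using assms by auto
  consider "x \<notin> A" | "x \<in> A" "norm x > R" | "x \<in> A" "norm x \<le> R" "f \<le> t" | "f > t"
    by linarith
  then show ?thesis
  proof cases
    case 1
    then show ?thesis using nonneg by simp
  next
    case 2
    then have "R\<^sup>2 \<le> (norm x)\<^sup>2" using assms by (simp add: power_mono)
    then have "f \<le> (norm x)\<^sup>2 * f / R\<^sup>2"
      using assms by (simp add: le_divide_eq mult_left_mono mult.commute)
    moreover have "f * indicator A x \<le> f" using assms(1) by (simp add: indicator_def)
    ultimately show ?thesis using nonneg by linarith
  next
    case 3
    then have "f * indicator A x \<le> t * indicator (A \<inter> cball 0 R) x" by (simp add: indicator_def)
    then show ?thesis using nonneg by linarith
  next
    case 4
    then have "f \<le> f\<^sup>2 / t" using assms by (simp add: le_divide_eq power2_eq_square)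
    moreover have "f * indicator A x \<le> f" using assms(1) by (simp add: indicator_def)
    ultimately show ?thesis using nonneg by linarith
  qed
qed

lemma tendsto_measure_tail_Int_cball:
  fixes A :: "nat \<Rightarrow> 'a::euclidean_space set"
  assumes disj: "disjoint_family A" and A: "range A \<subseteq> sets borel"
  shows "(\<lambda>N. measure lborel ((\<Union>i\<in>{N..}. A i) \<inter> cball 0 R)) \<longlonglongrightarrow> 0"
proof -
  define B where "B N = (\<Union>i\<in>{N..}. A i) \<inter> cball 0 R" for N
  have "(\<lambda>N. emeasure lborel (B N)) \<longlonglongrightarrow> emeasure lborel (\<Inter>N. B N)"
  proof (rule Lim_emeasure_decseq)
    show "range B \<subseteq> sets lborel"
      unfolding B_def using A by (auto intro!: sets.countable_UN' intro: countableI_type)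
    show "decseq B" unfolding B_def monotone_on_def by (auto intro: order_trans)
    show "emeasure lborel (B N) \<noteq> \<infinity>" for N
      using le_less_trans[OF emeasure_mono[of "B N" "cball 0 R"] emeasure_lborel_cball_finite]
      by (auto simp: B_def)
  qed
  moreover have "(\<Inter>N. B N) = {}"
  proof (rule equals0I)
    fix x assume "x \<in> (\<Inter>N. B N)"
    then have x: "x \<in> (\<Union>i\<in>{N..}. A i)" for N by (auto simp: B_def)
    from x[of 0] obtain i where i: "x \<in> A i" by auto
    from x[of "Suc i"] obtain j where j: "j \<ge> Suc i" "x \<in> A j" by auto
    then have "i \<noteq> j" by auto
    with disj i j show False unfolding disjoint_family_on_def by blast
  qed
  ultimately have "(\<lambda>N. emeasure lborel (B N)) \<longlonglongrightarrow> ennreal 0" by simp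
  then show ?thesis unfolding measure_def B_def by (rule tendsto_enn2real) simp
qed

locale bounded_density_seq =
  fixes \<phi> :: "nat \<Rightarrow> 'a::euclidean_space \<Rightarrow> real" and Q M :: real
  assumes measurable_phi: "\<And>n. \<phi> n \<in> borel_measurable borel"
    and nonneg_phi: "\<And>n x. 0 \<le> \<phi> n x"
    and integrable_phi: "\<And>n. integrable lborel (\<phi> n)"
    and mass_phi: "\<And>n. (LINT x|lborel. \<phi> n x) = 1"
    and integrable_square_phi: "\<And>n. integrable lborel (\<lambda>x. (\<phi> n x)\<^sup>2)"
    and square_le: "\<And>n. (LINT x|lborel. (\<phi> n x)\<^sup>2) \<le> Q"
    and integrable_moment_phi: "\<And>n. integrable lborel (\<lambda>x. (norm x)\<^sup>2 * \<phi> n x)"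
    and moment_le: "\<And>n. (LINT x|lborel. (norm x)\<^sup>2 * \<phi> n x) \<le> M"
begin

lemma comp: "bounded_density_seq (\<phi> \<circ> s) Q M"
  by unfold_locales (auto intro: measurable_phi nonneg_phi integrable_phi mass_phi
      integrable_square_phi square_le integrable_moment_phi moment_le)

lemma integrable_phi_indicator: "A \<in> sets borel \<Longrightarrow> integrable lborel (\<lambda>x. \<phi> n x * indicator A x)"
  by (rule integrable_real_mult_indicator) (auto intro: integrable_phi)

lemma mass_nonneg: "0 \<le> (LINT x|lborel. \<phi> n x * indicator A x)"
  by (rule integral_nonneg_AE) (simp add: nonneg_phi)

lemma mass_mono:
  assumes "A \<in> sets borel" "B \<in> sets borel" "A \<subseteq> B"
  shows "(LINT x|lborel. \<phi> n x * indicator A x) \<le> (LINT x|lborel. \<phi> n x * indicator B x)"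
  using assms integrable_phi_indicator nonneg_phi by (intro integral_mono) (auto simp: indicator_def)

lemma mass_le_1: "A \<in> sets borel \<Longrightarrow> (LINT x|lborel. \<phi> n x * indicator A x) \<le> 1"
  using mass_mono[of A UNIV n] mass_phi by simp

lemma nonneg_moment_bound: "0 \<le> M"
proof -
  have "0 \<le> (LINT x|lborel. (norm x)\<^sup>2 * \<phi> 0 x)" by (rule integral_nonneg_AE) (simp add: nonneg_phi)
  then show ?thesis using moment_le[of 0] by linarith
qed

lemma nonneg_square_bound: "0 \<le> Q"
proof -
  have "0 \<le> (LINT x|lborel. (\<phi> 0 x)\<^sup>2)" by (rule integral_nonneg_AE) simp
  then show ?thesis using square_le[of 0] by linarith
qed

lemma mass_le_truncation:
  assumes A: "A \<in> sets borel" and "t > 0" "R > 0"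
  shows "(LINT x|lborel. \<phi> n x * indicator A x)
    \<le> t * measure lborel (A \<inter> cball 0 R) + Q / t + M / R\<^sup>2"
proof -
  have AR: "A \<inter> cball 0 R \<in> sets lborel" using A by auto
  have "emeasure lborel (A \<inter> cball 0 R) < \<infinity>"
    by (rule le_less_trans[OF emeasure_mono[of _ "cball 0 R"] emeasure_lborel_cball_finite]) auto
  then have int_box: "integrable lborel (\<lambda>x. t * indicator (A \<inter> cball 0 R) x :: real)"
    using AR by (intro integrable_mult_right integrable_indicator) auto
  have "(LINT x|lborel. \<phi> n x * indicator A x) \<le>
     (LINT x|lborel. t * indicator (A \<inter> cball 0 R) x + (\<phi> n x)\<^sup>2 / t + (norm x)\<^sup>2 * \<phi> n x / R\<^sup>2)"
    using assms int_box integrable_phi_indicator[OF A] integrable_square_phi integrable_moment_phi nonneg_phi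
    by (intro integral_mono mult_indicator_le_truncation)
      (auto intro!: Bochner_Integration.integrable_add integrable_divide)
  also have "\<dots> = t * measure lborel (A \<inter> cball 0 R) + (LINT x|lborel. (\<phi> n x)\<^sup>2) / t
      + (LINT x|lborel. (norm x)\<^sup>2 * \<phi> n x) / R\<^sup>2"
    using int_box integrable_square_phi integrable_moment_phi AR
    by (subst Bochner_Integration.integral_add)
      (auto intro!: Bochner_Integration.integrable_add integrable_divide)
  also have "\<dots> \<le> t * measure lborel (A \<inter> cball 0 R) + Q / t + M / R\<^sup>2"
    using assms square_le moment_le by (intro add_mono divide_right_mono) auto
  finally show ?thesis .
qed

lemma tail_mass_uniformly_small:
  fixes A :: "nat \<Rightarrow> 'a set"
  assumes disj: "disjoint_family A" and A: "range A \<subseteq> sets borel" and e: "e > 0"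
  shows "\<exists>N. \<forall>n. (LINT x|lborel. \<phi> n x * indicator (\<Union>i\<in>{N..}. A i) x) \<le> e"
proof -
  define R where "R = sqrt (3 * (M + 1) / e)"
  define t where "t = 3 * (Q + 1) / e"
  have R: "R > 0" "R\<^sup>2 = 3 * (M + 1) / e" using nonneg_moment_bound e by (auto simp: R_def)
  have t: "t > 0" using nonneg_square_bound e by (auto simp: t_def)
  have "M / R\<^sup>2 = e / 3 * (M / (M + 1))" using nonneg_moment_bound e unfolding R(2) by (simp add: field_simps)
  also have "\<dots> \<le> e / 3" using nonneg_moment_bound e by (intro mult_left_le) auto
  finally have M_small: "M / R\<^sup>2 \<le> e / 3" .
  have Q_small: "Q / t \<le> e / 3" using nonneg_square_bound e by (simp add: t_def field_simps)
  define T where "T N = (\<Union>i\<in>{N..}. A i)" for N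
  have T: "T N \<in> sets borel" for N
    unfolding T_def using A by (intro sets.countable_UN') (auto intro: countableI_type)
  have "eventually (\<lambda>N. measure lborel (T N \<inter> cball 0 R) < e / 3 / t) sequentially"
    using tendsto_measure_tail_Int_cball[OF disj A] e t unfolding T_def by (intro order_tendstoD(2)) auto
  then obtain N where N: "measure lborel (T N \<inter> cball 0 R) < e / 3 / t"
    by (auto simp: eventually_sequentially)
  have "(LINT x|lborel. \<phi> n x * indicator (T N) x) \<le> e" for n
  proof -
    have "(LINT x|lborel. \<phi> n x * indicator (T N) x) \<le> t * measure lborel (T N \<inter> cball 0 R) + Q / t + M / R\<^sup>2"
      by (rule mass_le_truncation[OF T t R(1)])
    also have "t * measure lborel (T N \<inter> cball 0 R) \<le> e / 3" using N t by (simp add: field_simps)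
    finally show ?thesis using M_small Q_small by linarith
  qed
  then show ?thesis unfolding T_def by blast
qed

lemma mass_UN_split:
  fixes A :: "nat \<Rightarrow> 'a set"
  assumes disj: "disjoint_family A" and A: "range A \<subseteq> sets borel"
  shows "(LINT x|lborel. \<phi> n x * indicator (\<Union>i. A i) x) =
    (\<Sum>i<N. (LINT x|lborel. \<phi> n x * indicator (A i) x))
      + (LINT x|lborel. \<phi> n x * indicator (\<Union>i\<in>{N..}. A i) x)"
proof -
  define T where "T = (\<Union>i\<in>{N..}. A i)"
  have T: "T \<in> sets borel"
    unfolding T_def using A by (intro sets.countable_UN') (auto intro: countableI_type)
  have "{..<N} \<union> {N..} = (UNIV :: nat set)" by auto
  then have union: "(\<Union>i. A i) = (\<Union>i\<in>{..<N}. A i) \<union> T"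
    unfolding T_def by (metis UN_Un)
  have disjoint: "(\<Union>i\<in>{..<N}. A i) \<inter> T = {}"
  proof (rule equals0I)
    fix y assume "y \<in> (\<Union>i\<in>{..<N}. A i) \<inter> T"
    then obtain i j where ij: "i < N" "j \<ge> N" "y \<in> A i" "y \<in> A j" by (auto simp: T_def)
    then have "i \<noteq> j" by auto
    with disj ij show False unfolding disjoint_family_on_def by blast
  qed
  have "indicator (\<Union>i. A i) x = (\<Sum>i<N. indicator (A i) x) + (indicator T x :: real)" for x
  proof -
    have "indicator (\<Union>i. A i) x = indicator (\<Union>i\<in>{..<N}. A i) x + (indicator T x :: real)"
      unfolding union by (simp add: indicator_union_arith indicator_inter_arith[symmetric] disjoint)
    moreover have "indicator (\<Union>i\<in>{..<N}. A i) x = (\<Sum>i<N. indicator (A i) x :: real)"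
      by (rule indicator_UN_disjoint) (use disj in \<open>auto simp: disjoint_family_on_def\<close>)
    ultimately show ?thesis by simp
  qed
  then have "(\<lambda>x. \<phi> n x * indicator (\<Union>i. A i) x) =
      (\<lambda>x. (\<Sum>i<N. \<phi> n x * indicator (A i) x) + \<phi> n x * indicator T x)"
    by (simp add: sum_distrib_left distrib_left)
  moreover have "integrable lborel (\<lambda>x. \<Sum>i<N. \<phi> n x * indicator (A i) x)"
    using A by (intro Bochner_Integration.integrable_sum integrable_phi_indicator) auto
  moreover have "(LINT x|lborel. (\<Sum>i<N. \<phi> n x * indicator (A i) x))
      = (\<Sum>i<N. (LINT x|lborel. \<phi> n x * indicator (A i) x))"
    using A by (intro Bochner_Integration.integral_sum integrable_phi_indicator) auto
  ultimately show ?thesis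
    unfolding T_def[symmetric] using integrable_phi_indicator[OF T] by simp
qed

lemma convergent_mass_if_convergent_on_rational_boxes:
  assumes boxes: "\<And>A. A \<in> rational_boxes \<Longrightarrow> convergent (\<lambda>n. LINT x|lborel. \<phi> n x * indicator A x)"
    and A: "A \<in> sets borel"
  shows "convergent (\<lambda>n. LINT x|lborel. \<phi> n x * indicator A x)"
proof -
  have A': "A \<in> sigma_sets UNIV rational_boxes"
    using A by (simp add: sets_borel_eq_sigma_sets_rational_boxes)
  show ?thesis
  proof (rule sigma_sets_induct_disjoint[OF Int_stable_rational_boxes _ A',
        where P = "\<lambda>A. convergent (\<lambda>n. LINT x|lborel. \<phi> n x * indicator A x)"])
    fix A :: "'a set"
    assume "A \<in> sigma_sets UNIV rational_boxes"
      and IH: "convergent (\<lambda>n. LINT x|lborel. \<phi> n x * indicator A x)"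
    then have A: "A \<in> sets borel" by (simp add: sets_borel_eq_sigma_sets_rational_boxes)
    have "(\<lambda>x. \<phi> n x * indicator (UNIV - A) x) = (\<lambda>x. \<phi> n x - \<phi> n x * indicator A x)" for n
      by (auto simp: indicator_def)
    then have "(LINT x|lborel. \<phi> n x * indicator (UNIV - A) x)
        = 1 - (LINT x|lborel. \<phi> n x * indicator A x)" for n
      using integrable_phi integrable_phi_indicator[OF A] mass_phi
      by (simp add: Bochner_Integration.integral_diff)
    then show "convergent (\<lambda>n. LINT x|lborel. \<phi> n x * indicator (UNIV - A) x)"
      using IH by (simp add: convergent_diff convergent_const)
  next
    fix A :: "nat \<Rightarrow> 'a set"
    assume disj: "disjoint_family A" and "range A \<subseteq> sigma_sets UNIV rational_boxes"
      and IH: "\<And>i. convergent (\<lambda>n. LINT x|lborel. \<phi> n x * indicator (A i) x)"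
    then have A: "range A \<subseteq> sets borel" by (simp add: sets_borel_eq_sigma_sets_rational_boxes)
    show "convergent (\<lambda>n. LINT x|lborel. \<phi> n x * indicator (\<Union>i. A i) x)"
    proof (rule convergent_uniform_approx)
      fix e :: real assume "e > 0"
      from tail_mass_uniformly_small[OF disj A this] obtain N where
        N: "\<And>n. (LINT x|lborel. \<phi> n x * indicator (\<Union>i\<in>{N..}. A i) x) \<le> e" by blast
      let ?v = "\<lambda>n. \<Sum>i<N. (LINT x|lborel. \<phi> n x * indicator (A i) x)"
      have "convergent ?v" using IH by (intro convergent_sum) auto
      moreover have "\<bar>(LINT x|lborel. \<phi> n x * indicator (\<Union>i. A i) x) - ?v n\<bar> \<le> e" for n
        using mass_UN_split[OF disj A, of n N] N[of n] mass_nonneg by simp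
      ultimately show "\<exists>v. convergent v \<and>
          (\<forall>n. \<bar>(LINT x|lborel. \<phi> n x * indicator (\<Union>i. A i) x) - v n\<bar> \<le> e)"
        by blast
    qed
  qed (auto intro: boxes simp: convergent_const)
qed

lemma convergent_mass_subseq:
  "\<exists>s. strict_mono s \<and>
     (\<forall>A\<in>sets borel. convergent (\<lambda>n. LINT x|lborel. \<phi> (s n) x * indicator A x))"
proof -
  have "box 0 0 \<in> (rational_boxes :: 'a set set)"
    unfolding rational_boxes_def rational_points_def by (intro image_eqI[where x = "(0, 0)"]) auto
  then have "rational_boxes \<noteq> ({} :: 'a set set)" by auto
  then obtain G :: "nat \<Rightarrow> 'a set" where G: "range G = rational_boxes"
    using range_from_nat_into countable_rational_boxes by metis
  have G_borel: "G k \<in> sets borel" for k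
  proof -
    have "G k \<in> rational_boxes" using G by blast
    then show ?thesis by (auto simp: rational_boxes_def)
  qed
  define a where "a k n = (LINT x|lborel. \<phi> n x * indicator (G k) x)" for k n
  have "bounded (range (a k))" for k
    unfolding bounded_real a_def using mass_nonneg mass_le_1[OF G_borel] by (intro exI[of _ 1]) auto
  then obtain s where s: "strict_mono s" "\<And>k. convergent (\<lambda>n. a k (s n))"
    using diagonal_subseq_convergent by blast
  interpret subseq: bounded_density_seq "\<phi> \<circ> s" Q M by (rule comp)
  have "convergent (\<lambda>n. LINT x|lborel. (\<phi> \<circ> s) n x * indicator A x)" if "A \<in> sets borel" for A
  proof (rule subseq.convergent_mass_if_convergent_on_rational_boxes[OF _ that])
    fix B :: "'a set" assume "B \<in> rational_boxes"
    then obtain k where "B = G k" using G by auto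
    then show "convergent (\<lambda>n. LINT x|lborel. (\<phi> \<circ> s) n x * indicator B x)"
      using s(2)[of k] by (simp add: a_def)
  qed
  then show ?thesis using s(1) by auto
qed

end

lemma integrable_enn2real:
  fixes f :: "'a \<Rightarrow> ennreal"
  assumes f: "f \<in> borel_measurable M" and finite: "(\<integral>\<^sup>+x. f x \<partial>M) \<noteq> \<infinity>"
  shows "integrable M (\<lambda>x. enn2real (f x))"
    "A \<in> sets M \<Longrightarrow> (LINT x|M. enn2real (f x) * indicator A x) = enn2real (\<integral>\<^sup>+x. f x * indicator A x \<partial>M)"
proof -
  have finite_AE: "AE x in M. f x \<noteq> \<infinity>" using f finite by (rule nn_integral_PInf_AE)
  have nn: "(\<integral>\<^sup>+x. ennreal (enn2real (f x) * indicator A x) \<partial>M) = (\<integral>\<^sup>+x. f x * indicator A x \<partial>M)" for A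
  proof (rule nn_integral_cong_AE)
    show "AE x in M. ennreal (enn2real (f x) * indicator A x) = f x * indicator A x"
      using finite_AE by eventually_elim
        (auto simp: ennreal_mult' ennreal_indicator ennreal_enn2real top.not_eq_extremum)
  qed
  have "(\<integral>\<^sup>+x. ennreal (enn2real (f x)) \<partial>M) = (\<integral>\<^sup>+x. f x \<partial>M)"
  proof (rule nn_integral_cong_AE)
    show "AE x in M. ennreal (enn2real (f x)) = f x"
      using finite_AE by eventually_elim (auto simp: ennreal_enn2real top.not_eq_extremum)
  qed
  then show "integrable M (\<lambda>x. enn2real (f x))"
    using f finite by (intro integrableI_nonneg) (auto simp: top.not_eq_extremum)
  show "(LINT x|M. enn2real (f x) * indicator A x) = enn2real (\<integral>\<^sup>+x. f x * indicator A x \<partial>M)"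
    if "A \<in> sets M"
    using that f by (subst integral_eq_nn_integral) (auto simp: nn)
qed

locale setwise_convergent_density_seq = bounded_density_seq +
  assumes convergent_mass:
    "\<And>A. A \<in> sets borel \<Longrightarrow> convergent (\<lambda>n. LINT x|lborel. \<phi> n x * indicator A x)"
begin

definition lim_mass :: "'a set \<Rightarrow> real" where
  "lim_mass A = lim (\<lambda>n. LINT x|lborel. \<phi> n x * indicator A x)"

lemma mass_tendsto_lim_mass:
  "A \<in> sets borel \<Longrightarrow> (\<lambda>n. LINT x|lborel. \<phi> n x * indicator A x) \<longlonglongrightarrow> lim_mass A"
  unfolding lim_mass_def using convergent_mass convergent_LIMSEQ_iff by blast

lemma lim_mass_nonneg: "A \<in> sets borel \<Longrightarrow> 0 \<le> lim_mass A"
  by (rule LIMSEQ_le_const[OF mass_tendsto_lim_mass]) (use mass_nonneg in auto)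

lemma lim_mass_null:
  assumes "A \<in> null_sets lborel"
  shows "lim_mass A = 0"
proof -
  have "(LINT x|lborel. \<phi> n x * indicator A x) = 0" for n
    by (rule integral_eq_zero_AE) (use AE_not_in[OF assms] in \<open>auto simp: indicator_def\<close>)
  moreover have "A \<in> sets borel" using assms by auto
  ultimately show ?thesis
    using mass_tendsto_lim_mass[of A] by (simp add: LIMSEQ_const_iff)
qed

text \<open>Countable additivity survives the limit because the tails of a disjoint union carry
  uniformly small mass.\<close>

lemma lim_mass_sums:
  fixes A :: "nat \<Rightarrow> 'a set"
  assumes disj: "disjoint_family A" and A: "range A \<subseteq> sets borel"
  shows "(\<lambda>i. lim_mass (A i)) sums lim_mass (\<Union>i. A i)"
proof -
  define T where "T N = (\<Union>i\<in>{N..}. A i)" for N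
  have T: "T N \<in> sets borel" for N
    unfolding T_def using A by (intro sets.countable_UN') (auto intro: countableI_type)
  have split: "lim_mass (\<Union>i. A i) = (\<Sum>i<N. lim_mass (A i)) + lim_mass (T N)" for N
  proof -
    have "(\<lambda>n. LINT x|lborel. \<phi> n x * indicator (\<Union>i. A i) x)
        \<longlonglongrightarrow> (\<Sum>i<N. lim_mass (A i)) + lim_mass (T N)"
      unfolding mass_UN_split[OF disj A, of _ N] T_def[symmetric]
      using A T by (intro tendsto_add tendsto_sum mass_tendsto_lim_mass) auto
    moreover have "(\<Union>i. A i) \<in> sets borel" using A by auto
    ultimately show ?thesis using mass_tendsto_lim_mass LIMSEQ_unique by blast
  qed
  have "(\<lambda>N. lim_mass (T N)) \<longlonglongrightarrow> 0"
  proof (rule metric_LIMSEQ_I)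
    fix e :: real assume e: "e > 0"
    from tail_mass_uniformly_small[OF disj A, of "e / 2"] e obtain N0 where
      N0: "\<And>n. (LINT x|lborel. \<phi> n x * indicator (T N0) x) \<le> e / 2" unfolding T_def by auto
    have "dist (lim_mass (T N)) 0 < e" if "N \<ge> N0" for N
    proof -
      have "T N \<subseteq> T N0" using that unfolding T_def by (intro UN_mono) auto
      then have "(LINT x|lborel. \<phi> n x * indicator (T N) x) \<le> e / 2" for n
        using mass_mono[OF T T, of N N0 n] N0[of n] by linarith
      then have "lim_mass (T N) \<le> e / 2"
        by (intro LIMSEQ_le_const2[OF mass_tendsto_lim_mass[OF T]]) auto
      then show ?thesis using lim_mass_nonneg[OF T] e by simp
    qed
    then show "\<exists>no. \<forall>n\<ge>no. dist (lim_mass (T n)) 0 < e" by blast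
  qed
  then have "(\<lambda>N. lim_mass (\<Union>i. A i) - lim_mass (T N)) \<longlonglongrightarrow> lim_mass (\<Union>i. A i) - 0"
    by (intro tendsto_diff tendsto_const)
  moreover have "lim_mass (\<Union>i. A i) - lim_mass (T N) = (\<Sum>i<N. lim_mass (A i))" for N
    using split[of N] by simp
  ultimately show ?thesis unfolding sums_def by simp
qed

definition lim_measure :: "'a measure" where
  "lim_measure = measure_of UNIV (sets borel) (\<lambda>A. ennreal (lim_mass A))"

lemma sets_lim_measure: "sets lim_measure = sets lborel"
  unfolding lim_measure_def using sets.sigma_sets_eq[of borel] by (simp add: sets_measure_of)

lemma emeasure_lim_measure:
  assumes "A \<in> sets borel"
  shows "emeasure lim_measure A = ennreal (lim_mass A)"
  unfolding lim_measure_def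
proof (rule emeasure_measure_of_sigma)
  show "sigma_algebra UNIV (sets borel)" using sets.sigma_algebra_axioms[of borel] by simp
  show "positive (sets borel) (\<lambda>A. ennreal (lim_mass A))"
    unfolding positive_def using lim_mass_null[of "{}"] by simp
  show "countably_additive (sets borel) (\<lambda>A. ennreal (lim_mass A))"
    unfolding countably_additive_def
  proof (intro allI impI)
    fix A :: "nat \<Rightarrow> 'a set" assume A: "range A \<subseteq> sets borel" and disj: "disjoint_family A"
    have sums: "(\<lambda>i. lim_mass (A i)) sums lim_mass (\<Union>i. A i)" by (rule lim_mass_sums[OF disj A])
    then have "(\<Sum>i. ennreal (lim_mass (A i))) = ennreal (\<Sum>i. lim_mass (A i))"
      using A lim_mass_nonneg by (intro suminf_ennreal2) (auto simp: sums_summable)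
    also have "(\<Sum>i. lim_mass (A i)) = lim_mass (\<Union>i. A i)" using sums by (simp add: sums_unique[symmetric])
    finally show "(\<Sum>i. ennreal (lim_mass (A i))) = ennreal (lim_mass (\<Union>i. A i))" .
  qed
qed (use assms in auto)

lemma absolutely_continuous_lim_measure: "absolutely_continuous lborel lim_measure"
  unfolding absolutely_continuous_def
proof
  fix A :: "'a set" assume A: "A \<in> null_sets lborel"
  then show "A \<in> null_sets lim_measure"
    using emeasure_lim_measure[of A] lim_mass_null[OF A] sets_lim_measure by (auto simp: null_sets_def)
qed

lemma lim_mass_density:
  obtains \<sigma> where "\<sigma> \<in> borel_measurable borel" "\<And>x. 0 \<le> \<sigma> x" "integrable lborel \<sigma>"
    "\<And>A. A \<in> sets borel \<Longrightarrow> (LINT x|lborel. \<sigma> x * indicator A x) = lim_mass A"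
proof -
  obtain f where f: "f \<in> borel_measurable lborel" "density lborel f = lim_measure"
    using sigma_finite_measure.Radon_Nikodym[OF lborel.sigma_finite_measure_axioms
        absolutely_continuous_lim_measure sets_lim_measure] by blast
  have nn_f: "(\<integral>\<^sup>+x. f x * indicator A x \<partial>lborel) = ennreal (lim_mass A)" if "A \<in> sets borel" for A
  proof -
    have "ennreal (lim_mass A) = emeasure (density lborel f) A" using emeasure_lim_measure[OF that] f(2) by simp
    also have "\<dots> = (\<integral>\<^sup>+x. f x * indicator A x \<partial>lborel)" using f(1) that by (simp add: emeasure_density)
    finally show ?thesis by simp
  qed
  have finite: "(\<integral>\<^sup>+x. f x \<partial>lborel) \<noteq> \<infinity>" using nn_f[of UNIV] by simp
  show ?thesis
  proof (rule that)
    show "(\<lambda>x. enn2real (f x)) \<in> borel_measurable borel" using f(1) by simp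
    show "0 \<le> enn2real (f x)" for x by simp
    show "integrable lborel (\<lambda>x. enn2real (f x))" by (rule integrable_enn2real(1)[OF f(1) finite])
    show "(LINT x|lborel. enn2real (f x) * indicator A x) = lim_mass A" if "A \<in> sets borel" for A
      using integrable_enn2real(2)[OF f(1) finite, of A] nn_f[OF that] lim_mass_nonneg[OF that] that by simp
  qed
qed

end

definition floor_level :: "('a \<Rightarrow> real) \<Rightarrow> nat \<Rightarrow> int \<Rightarrow> 'a set" where
  "floor_level g m j = {x. \<lfloor>real m * g x\<rfloor> = j}"

lemma floor_level_borel:
  fixes g :: "'a::euclidean_space \<Rightarrow> real"
  assumes [measurable]: "g \<in> borel_measurable borel"
  shows "floor_level g m j \<in> sets borel"
proof -
  have "floor_level g m j = {x. of_int j \<le> real m * g x \<and> real m * g x < of_int j + 1}"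
    unfolding floor_level_def by (auto simp: floor_eq_iff)
  also have "\<dots> \<in> sets borel" by measurable
  finally show ?thesis .
qed

lemma floor_level_approx:
  fixes g :: "'a \<Rightarrow> real"
  assumes B: "\<And>x. \<bar>g x\<bar> \<le> B" and m: "m > 0"
  shows "\<bar>g x - (\<Sum>j\<in>{-(\<lceil>real m * B\<rceil> + 1)..\<lceil>real m * B\<rceil> + 1}.
    of_int j / real m * indicator (floor_level g m j) x)\<bar> \<le> 1 / real m"
proof -
  define K where "K = \<lceil>real m * B\<rceil> + 1"
  define k where "k = \<lfloor>real m * g x\<rfloor>"
  have mB: "\<bar>real m * g x\<bar> \<le> real m * B" using B[of x] m by (simp add: abs_mult mult_left_mono)
  have low: "\<lfloor>- (real m * B)\<rfloor> \<le> k" and up: "k \<le> \<lfloor>real m * B\<rfloor>"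
    unfolding k_def using mB by (intro floor_mono; simp add: abs_le_iff)+
  have "- \<lceil>real m * B\<rceil> \<le> k" using low by (simp add: floor_minus)
  moreover have "k \<le> \<lceil>real m * B\<rceil>" using up floor_le_ceiling[of "real m * B"] by linarith
  ultimately have "k \<in> {-K..K}" unfolding K_def by simp
  have "(\<Sum>j\<in>{-K..K}. of_int j / real m * indicator (floor_level g m j) x)
      = (\<Sum>j\<in>{-K..K}. if k = j then of_int j / real m else 0)"
    by (intro sum.cong) (auto simp: floor_level_def k_def indicator_def)
  also have "\<dots> = of_int k / real m" using \<open>k \<in> {-K..K}\<close> by (subst sum.delta') auto
  finally have "(\<Sum>j\<in>{-K..K}. of_int j / real m * indicator (floor_level g m j) x) = of_int k / real m" .
  moreover have "0 \<le> real m * g x - of_int k" "real m * g x - of_int k \<le> 1"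
    unfolding k_def by linarith+
  then have "\<bar>(real m * g x - of_int k) / real m\<bar> \<le> 1 / real m"
    using m by (simp add: divide_right_mono)
  then have "\<bar>g x - of_int k / real m\<bar> \<le> 1 / real m"
    using m by (simp add: diff_divide_distrib)
  ultimately show ?thesis unfolding K_def by simp
qed

lemma integral_mult_floor_level_sum:
  fixes f :: "'a::euclidean_space \<Rightarrow> real"
  assumes f: "integrable lborel f" and g: "g \<in> borel_measurable borel" and J: "finite J"
  shows "integrable lborel (\<lambda>x. f x * (\<Sum>j\<in>J. of_int j / real m * indicator (floor_level g m j) x))"
    "(LINT x|lborel. f x * (\<Sum>j\<in>J. of_int j / real m * indicator (floor_level g m j) x)) =
      (\<Sum>j\<in>J. of_int j / real m * (LINT x|lborel. f x * indicator (floor_level g m j) x))"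
proof -
  have eq: "(\<lambda>x. f x * (\<Sum>j\<in>J. of_int j / real m * indicator (floor_level g m j) x)) =
      (\<lambda>x. \<Sum>j\<in>J. of_int j / real m * (f x * indicator (floor_level g m j) x))"
    by (simp add: sum_distrib_left mult.left_commute)
  have "integrable lborel (\<lambda>x. f x * indicator (floor_level g m j) x)" for j
    using floor_level_borel[OF g] f by (intro integrable_real_mult_indicator) auto
  then show "integrable lborel (\<lambda>x. f x * (\<Sum>j\<in>J. of_int j / real m * indicator (floor_level g m j) x))"
    "(LINT x|lborel. f x * (\<Sum>j\<in>J. of_int j / real m * indicator (floor_level g m j) x)) =
      (\<Sum>j\<in>J. of_int j / real m * (LINT x|lborel. f x * indicator (floor_level g m j) x))"
    unfolding eq by (auto intro!: Bochner_Integration.integrable_sum simp: Bochner_Integration.integral_sum)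
qed

lemma weak_convergence_if_setwise:
  fixes \<psi> :: "nat \<Rightarrow> 'a::euclidean_space \<Rightarrow> real" and \<sigma> :: "'a \<Rightarrow> real"
  assumes \<psi>: "\<And>n. integrable lborel (\<psi> n)" "\<And>n x. 0 \<le> \<psi> n x" "\<And>n. (LINT x|lborel. \<psi> n x) = 1"
    and \<sigma>: "integrable lborel \<sigma>" "\<And>x. 0 \<le> \<sigma> x" "(LINT x|lborel. \<sigma> x) = 1"
    and setwise: "\<And>A. A \<in> sets borel \<Longrightarrow>
      (\<lambda>n. LINT x|lborel. \<psi> n x * indicator A x) \<longlonglongrightarrow> (LINT x|lborel. \<sigma> x * indicator A x)"
    and g: "g \<in> borel_measurable borel" "\<And>x. \<bar>g x\<bar> \<le> B"
  shows "(\<lambda>n. LINT x|lborel. \<psi> n x * g x) \<longlonglongrightarrow> (LINT x|lborel. \<sigma> x * g x)"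
proof -
  define J where "J m = {-(\<lceil>real (Suc m) * B\<rceil> + 1)..\<lceil>real (Suc m) * B\<rceil> + 1}" for m
  define g_m where "g_m m x = (\<Sum>j\<in>J m. of_int j / real (Suc m) * indicator (floor_level g (Suc m) j) x)"
    for m x
  have J: "finite (J m)" for m by (simp add: J_def)
  have err: "\<bar>g x - g_m m x\<bar> \<le> 1 / real (Suc m)" for m x
    unfolding g_m_def J_def by (rule floor_level_approx[OF g(2)]) simp
  have g_int: "integrable lborel (\<lambda>x. f x * g x)" if "integrable lborel f" for f :: "'a \<Rightarrow> real"
    using that g by (intro integrable_mult_bounded) auto
  have g_m_int: "integrable lborel (\<lambda>x. f x * g_m m x)" if "integrable lborel f" for f :: "'a \<Rightarrow> real" and m
    unfolding g_m_def by (rule integral_mult_floor_level_sum(1)[OF that g(1) J])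
  show ?thesis
  proof (rule LIMSEQ_uniform_approx[where b = "\<lambda>m n. LINT x|lborel. \<psi> n x * g_m m x"
        and c = "\<lambda>m. LINT x|lborel. \<sigma> x * g_m m x" and e = "\<lambda>m. 1 / real (Suc m)"])
    show "(\<lambda>n. LINT x|lborel. \<psi> n x * g_m m x) \<longlonglongrightarrow> (LINT x|lborel. \<sigma> x * g_m m x)" for m
      unfolding g_m_def integral_mult_floor_level_sum(2)[OF \<psi>(1) g(1) J]
        integral_mult_floor_level_sum(2)[OF \<sigma>(1) g(1) J]
      by (intro tendsto_sum tendsto_mult_left setwise floor_level_borel g(1))
    show "\<bar>(LINT x|lborel. \<psi> n x * g x) - (LINT x|lborel. \<psi> n x * g_m m x)\<bar> \<le> 1 / real (Suc m)" for m n
      by (rule integral_density_mult_diff_le) (use \<psi> err g_int g_m_int in auto)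
    show "\<bar>(LINT x|lborel. \<sigma> x * g x) - (LINT x|lborel. \<sigma> x * g_m m x)\<bar> \<le> 1 / real (Suc m)" for m
      by (rule integral_density_mult_diff_le) (use \<sigma> err g_int g_m_int in auto)
    show "(\<lambda>m. 1 / real (Suc m)) \<longlonglongrightarrow> 0"
      using LIMSEQ_inverse_real_of_nat by (simp add: inverse_eq_divide)
  qed
qed

lemma integrable_scaleR_id_if_second_moment:
  fixes f :: "'a::euclidean_space \<Rightarrow> real"
  assumes "f \<in> borel_measurable borel" "\<And>x. 0 \<le> f x" "integrable lborel f"
    "integrable lborel (\<lambda>x. (norm x)\<^sup>2 * f x)"
  shows "integrable lborel (\<lambda>x. f x *\<^sub>R x)"
proof (rule Bochner_Integration.integrable_bound[of _ "\<lambda>x. f x + (norm x)\<^sup>2 * f x"])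
  show "integrable lborel (\<lambda>x. f x + (norm x)\<^sup>2 * f x)" using assms by auto
  show "(\<lambda>x. f x *\<^sub>R x) \<in> borel_measurable lborel" using assms(1) by simp
  show "AE x in lborel. norm (f x *\<^sub>R x) \<le> norm (f x + (norm x)\<^sup>2 * f x)"
  proof (rule AE_I2)
    fix x :: 'a
    have "2 * norm x \<le> 1 + (norm x)\<^sup>2" using sum_squares_bound[of 1 "norm x"] by simp
    then have "norm x \<le> 1 + (norm x)\<^sup>2" using norm_ge_zero[of x] by linarith
    then have "f x * norm x \<le> f x * (1 + (norm x)\<^sup>2)" using assms(2)[of x] by (intro mult_left_mono) auto
    then show "norm (f x *\<^sub>R x) \<le> norm (f x + (norm x)\<^sup>2 * f x)"
      using assms(2)[of x] by (simp add: algebra_simps)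
  qed
qed

lemma inner_first_moment:
  fixes f :: "'a::euclidean_space \<Rightarrow> real"
  assumes "f \<in> borel_measurable borel" "\<And>x. 0 \<le> f x" "integrable lborel f"
    "integrable lborel (\<lambda>x. (norm x)\<^sup>2 * f x)"
  shows "integrable lborel (\<lambda>x. f x * (x \<bullet> b))" "moment1 f \<bullet> b = (LINT x|lborel. f x * (x \<bullet> b))"
proof -
  have "integrable lborel (\<lambda>x. f x *\<^sub>R x)" by (rule integrable_scaleR_id_if_second_moment[OF assms])
  then show "integrable lborel (\<lambda>x. f x * (x \<bullet> b))" "moment1 f \<bullet> b = (LINT x|lborel. f x * (x \<bullet> b))"
    using integrable_inner_left[of b lborel "\<lambda>x. f x *\<^sub>R x"] integral_inner_left[of b lborel "\<lambda>x. f x *\<^sub>R x"]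
    by (simp_all add: moment1_def)
qed

definition cutoff :: "real \<Rightarrow> real \<Rightarrow> real" where
  "cutoff m y = max (- m) (min m y)"

lemma abs_cutoff_le: "m \<ge> 0 \<Longrightarrow> \<bar>cutoff m y\<bar> \<le> m"
  by (auto simp: cutoff_def)

lemma abs_diff_cutoff_le:
  assumes "m > 0"
  shows "\<bar>y - cutoff m y\<bar> \<le> y\<^sup>2 / m"
proof (cases "\<bar>y\<bar> \<le> m")
  case True
  then show ?thesis using assms by (auto simp: cutoff_def)
next
  case False
  then have "\<bar>y - cutoff m y\<bar> \<le> \<bar>y\<bar>" using assms by (auto simp: cutoff_def max_def min_def abs_if)
  also have "\<bar>y\<bar> * m \<le> \<bar>y\<bar> * \<bar>y\<bar>" using False by (intro mult_left_mono) auto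
  then have "\<bar>y\<bar> \<le> y\<^sup>2 / m" using assms by (simp add: le_divide_eq power2_eq_square)
  finally show ?thesis .
qed

lemma first_moment_cutoff_error:
  fixes f :: "'a::euclidean_space \<Rightarrow> real"
  assumes f: "f \<in> borel_measurable borel" "\<And>x. 0 \<le> f x" "integrable lborel f"
    "integrable lborel (\<lambda>x. (norm x)\<^sup>2 * f x)" "(LINT x|lborel. (norm x)\<^sup>2 * f x) \<le> C"
    and b: "b \<in> Basis" and m: "m > 0"
  shows "\<bar>moment1 f \<bullet> b - (LINT x|lborel. f x * cutoff m (x \<bullet> b))\<bar> \<le> C / m"
proof -
  have i1: "integrable lborel (\<lambda>x. f x * (x \<bullet> b))" by (rule inner_first_moment(1)[OF f(1-4)])
  have i2: "integrable lborel (\<lambda>x. f x * cutoff m (x \<bullet> b))"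
    using f(3) m by (intro integrable_mult_bounded[where B = m] abs_cutoff_le) (auto simp: cutoff_def)
  have "\<bar>moment1 f \<bullet> b - (LINT x|lborel. f x * cutoff m (x \<bullet> b))\<bar> =
     norm (LINT x|lborel. f x * (x \<bullet> b) - f x * cutoff m (x \<bullet> b))"
    using i1 i2 inner_first_moment(2)[OF f(1-4)] by (simp add: Bochner_Integration.integral_diff)
  also have "\<dots> \<le> (LINT x|lborel. norm (f x * (x \<bullet> b) - f x * cutoff m (x \<bullet> b)))"
    by (rule integral_norm_bound)
  also have "\<dots> \<le> (LINT x|lborel. (norm x)\<^sup>2 * f x / m)"
  proof (rule integral_mono)
    show "integrable lborel (\<lambda>x. norm (f x * (x \<bullet> b) - f x * cutoff m (x \<bullet> b)))" using i1 i2 by auto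
    show "integrable lborel (\<lambda>x. (norm x)\<^sup>2 * f x / m)" using f(4) by auto
    fix x :: 'a
    have "(x \<bullet> b)\<^sup>2 \<le> (norm x)\<^sup>2"
      using power_mono[OF Basis_le_norm[OF b, of x], of 2] by simp
    then have "\<bar>x \<bullet> b - cutoff m (x \<bullet> b)\<bar> \<le> (norm x)\<^sup>2 / m"
      using abs_diff_cutoff_le[OF m, of "x \<bullet> b"] m by (meson divide_right_mono less_imp_le order_trans)
    then have "f x * \<bar>x \<bullet> b - cutoff m (x \<bullet> b)\<bar> \<le> f x * ((norm x)\<^sup>2 / m)"
      using f(2)[of x] by (intro mult_left_mono) auto
    then show "norm (f x * (x \<bullet> b) - f x * cutoff m (x \<bullet> b)) \<le> (norm x)\<^sup>2 * f x / m"
      using f(2)[of x] by (simp add: abs_mult right_diff_distrib[symmetric] mult.commute)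
  qed
  also have "\<dots> \<le> C / m" using f(5) m by (simp add: divide_right_mono)
  finally show ?thesis .
qed

locale setwise_limit = bounded_density_seq +
  fixes \<sigma> :: "'a::euclidean_space \<Rightarrow> real"
  assumes measurable_sigma: "\<sigma> \<in> borel_measurable borel"
    and nonneg_sigma: "\<And>x. 0 \<le> \<sigma> x"
    and integrable_sigma: "integrable lborel \<sigma>"
    and mass_tendsto: "\<And>A. A \<in> sets borel \<Longrightarrow>
      (\<lambda>n. LINT x|lborel. \<phi> n x * indicator A x) \<longlonglongrightarrow> (LINT x|lborel. \<sigma> x * indicator A x)"
begin

lemma mass_sigma: "(LINT x|lborel. \<sigma> x) = 1"
  using mass_tendsto[of UNIV] mass_phi by (simp add: LIMSEQ_const_iff)

lemma tendsto_integral_mult_bounded: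
  assumes "g \<in> borel_measurable borel" "\<And>x. \<bar>g x\<bar> \<le> B"
  shows "(\<lambda>n. LINT x|lborel. \<phi> n x * g x) \<longlonglongrightarrow> (LINT x|lborel. \<sigma> x * g x)"
  using integrable_phi nonneg_phi mass_phi integrable_sigma nonneg_sigma mass_sigma mass_tendsto assms
  by (rule weak_convergence_if_setwise)

lemma integrable_moment_sigma: "integrable lborel (\<lambda>x. (norm x)\<^sup>2 * \<sigma> x)"
proof -
  define g where "g r x = min ((norm x)\<^sup>2) (real r)" for r :: nat and x :: 'a
  have g_borel: "g r \<in> borel_measurable borel" for r
    unfolding g_def by (intro borel_measurable_continuous_onI continuous_intros)
  have g_bounded: "\<bar>g r x\<bar> \<le> real r" for r x by (simp add: g_def)
  have g_int: "integrable lborel (\<lambda>x. \<sigma> x * g r x)" for r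
    using g_borel g_bounded integrable_sigma by (intro integrable_mult_bounded) auto
  have g_le: "(LINT x|lborel. \<sigma> x * g r x) \<le> M" for r
  proof (rule LIMSEQ_le_const2[OF tendsto_integral_mult_bounded[OF g_borel g_bounded]], intro exI allI impI)
    fix n
    have "(LINT x|lborel. \<phi> n x * g r x) \<le> (LINT x|lborel. (norm x)\<^sup>2 * \<phi> n x)"
    proof (rule integral_mono)
      show "integrable lborel (\<lambda>x. \<phi> n x * g r x)"
        using g_borel g_bounded integrable_phi by (intro integrable_mult_bounded) auto
      show "\<phi> n x * g r x \<le> (norm x)\<^sup>2 * \<phi> n x" for x
        using nonneg_phi[of n x] by (simp add: g_def mult.commute mult_left_mono)
    qed (rule integrable_moment_phi)
    then show "(LINT x|lborel. \<phi> n x * g r x) \<le> M" using moment_le[of n] by linarith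
  qed
  have mono: "incseq (\<lambda>r. \<sigma> x * g r x)" for x
    using nonneg_sigma by (intro incseq_SucI) (auto simp: g_def intro!: mult_left_mono)
  show ?thesis
  proof (rule integrable_monotone_convergence[where f = "\<lambda>r x. \<sigma> x * g r x"])
    show "(\<lambda>r. LINT x|lborel. \<sigma> x * g r x) \<longlonglongrightarrow> Sup (range (\<lambda>r. LINT x|lborel. \<sigma> x * g r x))"
      using g_int g_le mono
      by (intro LIMSEQ_incseq_SUP) (auto simp: bdd_above_def incseq_def intro!: integral_mono)
    show "AE x in lborel. (\<lambda>r. \<sigma> x * g r x) \<longlonglongrightarrow> (norm x)\<^sup>2 * \<sigma> x"
    proof (rule AE_I2)
      fix x :: 'a
      obtain N where N: "(norm x)\<^sup>2 \<le> real N" using real_arch_simple by blast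
      have "eventually (\<lambda>r. \<sigma> x * g r x = (norm x)\<^sup>2 * \<sigma> x) sequentially"
        unfolding eventually_sequentially by (rule exI[of _ N]) (use N in \<open>auto simp: g_def min_def\<close>)
      then show "(\<lambda>r. \<sigma> x * g r x) \<longlonglongrightarrow> (norm x)\<^sup>2 * \<sigma> x" by (rule tendsto_eventually)
    qed
  qed (use g_int mono measurable_sigma in auto)
qed

text \<open>The first moment is tested against the unbounded function \<open>x \<bullet> b\<close>; truncating it at
  height \<open>m\<close> costs at most \<open>M / m\<close>, uniformly in \<open>n\<close>, by the second-moment bound.\<close>

lemma tendsto_moment1: "(\<lambda>n. moment1 (\<phi> n)) \<longlonglongrightarrow> moment1 \<sigma>"
proof -
  define C where "C = max M (LINT x|lborel. (norm x)\<^sup>2 * \<sigma> x)"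
  have "(\<lambda>n. moment1 (\<phi> n) \<bullet> b) \<longlonglongrightarrow> moment1 \<sigma> \<bullet> b" if b: "b \<in> Basis" for b
  proof (rule LIMSEQ_uniform_approx[where b = "\<lambda>k n. LINT x|lborel. \<phi> n x * cutoff (real (Suc k)) (x \<bullet> b)"
        and c = "\<lambda>k. LINT x|lborel. \<sigma> x * cutoff (real (Suc k)) (x \<bullet> b)" and e = "\<lambda>k. C / real (Suc k)"])
    fix k
    have "(\<lambda>x. cutoff (real (Suc k)) (x \<bullet> b)) \<in> borel_measurable borel"
      unfolding cutoff_def by (intro borel_measurable_continuous_onI continuous_intros)
    then show "(\<lambda>n. LINT x|lborel. \<phi> n x * cutoff (real (Suc k)) (x \<bullet> b))
        \<longlonglongrightarrow> (LINT x|lborel. \<sigma> x * cutoff (real (Suc k)) (x \<bullet> b))"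
      by (rule tendsto_integral_mult_bounded[OF _ abs_cutoff_le]) simp
    have C: "M / real (Suc k) \<le> C / real (Suc k)"
      "(LINT x|lborel. (norm x)\<^sup>2 * \<sigma> x) / real (Suc k) \<le> C / real (Suc k)"
      by (simp_all add: C_def divide_right_mono)
    show "\<bar>moment1 (\<phi> n) \<bullet> b - (LINT x|lborel. \<phi> n x * cutoff (real (Suc k)) (x \<bullet> b))\<bar>
        \<le> C / real (Suc k)" for n
      using first_moment_cutoff_error[OF measurable_phi nonneg_phi integrable_phi integrable_moment_phi
          moment_le b, of "real (Suc k)" n] C(1) by auto
    show "\<bar>moment1 \<sigma> \<bullet> b - (LINT x|lborel. \<sigma> x * cutoff (real (Suc k)) (x \<bullet> b))\<bar> \<le> C / real (Suc k)"
      using first_moment_cutoff_error[OF measurable_sigma nonneg_sigma integrable_sigma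
          integrable_moment_sigma order_refl b, of "real (Suc k)"] C(2)
      by auto
  next
    have "(\<lambda>k. C * inverse (real (Suc k))) \<longlonglongrightarrow> C * 0"
      by (intro tendsto_mult tendsto_const LIMSEQ_inverse_real_of_nat)
    then show "(\<lambda>k. C / real (Suc k)) \<longlonglongrightarrow> 0" by (simp add: divide_inverse)
  qed
  then have "(\<lambda>n. \<Sum>b\<in>Basis. (moment1 (\<phi> n) \<bullet> b) *\<^sub>R b) \<longlonglongrightarrow> (\<Sum>b\<in>Basis. (moment1 \<sigma> \<bullet> b) *\<^sub>R b)"
    by (intro tendsto_sum tendsto_scaleR tendsto_const) auto
  then show ?thesis by (simp add: euclidean_representation)
qed

end

lemma weak_L1_conv_subseq:
  assumes "weak_L1_conv f g" "strict_mono r"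
  shows "weak_L1_conv (f \<circ> r) g"
  using assms LIMSEQ_subseq_LIMSEQ unfolding weak_L1_conv_def by (fastforce simp: o_def)

lemma (in bounded_density_seq) weakly_convergent_subseq:
  obtains s \<sigma> where "strict_mono s" "P2_density \<sigma>" "weak_L1_conv (\<phi> \<circ> s) \<sigma>"
    "(\<lambda>n. moment1 (\<phi> (s n))) \<longlonglongrightarrow> moment1 \<sigma>"
proof -
  obtain s where s: "strict_mono s"
    "\<And>A. A \<in> sets borel \<Longrightarrow> convergent (\<lambda>n. LINT x|lborel. \<phi> (s n) x * indicator A x)"
    using convergent_mass_subseq by blast
  interpret subseq: setwise_convergent_density_seq "\<phi> \<circ> s" Q M
    using comp s(2) by (simp add: setwise_convergent_density_seq_def setwise_convergent_density_seq_axioms_def)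
  obtain \<sigma> where \<sigma>: "\<sigma> \<in> borel_measurable borel" "\<And>x. 0 \<le> \<sigma> x" "integrable lborel \<sigma>"
    "\<And>A. A \<in> sets borel \<Longrightarrow> (LINT x|lborel. \<sigma> x * indicator A x) = subseq.lim_mass A"
    using subseq.lim_mass_density by blast
  interpret limit: setwise_limit "\<phi> \<circ> s" Q M \<sigma>
    by unfold_locales (use \<sigma> subseq.mass_tendsto_lim_mass in auto)
  show ?thesis
  proof
    show "strict_mono s" by (fact s(1))
    show "P2_density \<sigma>"
      unfolding P2_density_def using \<sigma> limit.mass_sigma limit.integrable_moment_sigma by auto
    show "weak_L1_conv (\<phi> \<circ> s) \<sigma>"
      unfolding weak_L1_conv_def bounded_real
      using \<sigma>(3) integrable_phi limit.tendsto_integral_mult_bounded by fastforce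
    show "(\<lambda>n. moment1 (\<phi> (s n))) \<longlonglongrightarrow> moment1 \<sigma>"
      using limit.tendsto_moment1 by simp
  qed
qed

lemma X0_weakly_convergent_subseq:
  fixes \<rho>1 \<rho>2 :: "nat \<Rightarrow> 'a::euclidean_space \<Rightarrow> real"
  assumes \<rho>1: "bounded_density_seq \<rho>1 Q M" and \<rho>2: "bounded_density_seq \<rho>2 Q M"
    and moments: "(\<lambda>n. moment1 (\<rho>1 n) + moment1 (\<rho>2 n)) \<longlonglongrightarrow> 0"
  shows "\<exists>s \<sigma>1 \<sigma>2. strict_mono s \<and> X0 \<sigma>1 \<sigma>2 \<and> weak_L1_conv (\<rho>1 \<circ> s) \<sigma>1 \<and> weak_L1_conv (\<rho>2 \<circ> s) \<sigma>2"
proof -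
  obtain s1 \<sigma>1 where s1: "strict_mono s1" "P2_density \<sigma>1" "weak_L1_conv (\<rho>1 \<circ> s1) \<sigma>1"
    "(\<lambda>n. moment1 (\<rho>1 (s1 n))) \<longlonglongrightarrow> moment1 \<sigma>1"
    using bounded_density_seq.weakly_convergent_subseq[OF \<rho>1] by blast
  obtain s2 \<sigma>2 where s2: "strict_mono s2" "P2_density \<sigma>2" "weak_L1_conv (\<rho>2 \<circ> s1 \<circ> s2) \<sigma>2"
    "(\<lambda>n. moment1 (\<rho>2 (s1 (s2 n)))) \<longlonglongrightarrow> moment1 \<sigma>2"
    using bounded_density_seq.weakly_convergent_subseq[OF bounded_density_seq.comp[OF \<rho>2, of s1]] by auto
  define s where "s = s1 \<circ> s2"
  have "(\<lambda>n. moment1 (\<rho>1 (s n)) + moment1 (\<rho>2 (s n))) \<longlonglongrightarrow> moment1 \<sigma>1 + moment1 \<sigma>2"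
    unfolding s_def using LIMSEQ_subseq_LIMSEQ[OF s1(4) s2(1)] s2(4) by (intro tendsto_add) (auto simp: o_def)
  moreover have "(\<lambda>n. moment1 (\<rho>1 (s n)) + moment1 (\<rho>2 (s n))) \<longlonglongrightarrow> 0"
    unfolding s_def using LIMSEQ_subseq_LIMSEQ[OF moments strict_mono_o[OF s1(1) s2(1)]] by (simp add: o_def)
  ultimately have "X0 \<sigma>1 \<sigma>2" using s1(2) s2(2) LIMSEQ_unique by (auto simp: X0_def)
  moreover have "weak_L1_conv (\<rho>1 \<circ> s) \<sigma>1" unfolding s_def
    using weak_L1_conv_subseq[OF s1(3) s2(1)] by (simp add: o_assoc)
  moreover have "weak_L1_conv (\<rho>2 \<circ> s) \<sigma>2" unfolding s_def using s2(3) by (simp add: o_assoc)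
  ultimately show ?thesis using strict_mono_o[OF s1(1) s2(1)] unfolding s_def by blast
qed

section \<open>Coercivity of the energy\<close>

lemma has_real_derivative_along_line:
  fixes f :: "'a::real_normed_vector \<Rightarrow> real"
  assumes "(f has_derivative f') (at (t *\<^sub>R z))"
  shows "((\<lambda>s. f (s *\<^sub>R z)) has_real_derivative f' z) (at t within S)"
proof -
  have "((\<lambda>s. s *\<^sub>R z) has_derivative (\<lambda>h. h *\<^sub>R z)) (at t within S)"
    by (auto intro!: derivative_eq_intros)
  from has_derivative_compose[OF this assms]
  have "((\<lambda>s. f (s *\<^sub>R z)) has_derivative (\<lambda>h. f' (h *\<^sub>R z))) (at t within S)" .
  moreover have "(\<lambda>h. f' (h *\<^sub>R z)) = (*) (f' z)"
    using linear_scale[OF has_derivative_linear[OF assms]] by (auto simp: mult.commute)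
  ultimately show ?thesis by (simp add: has_field_derivative_def)
qed

text \<open>Taylor's formula along the ray through \<open>z\<close>: \<open>K z\<close> equals half the Hessian quadratic form
  at an intermediate point, because \<open>K\<close> and its gradient vanish at the minimum \<open>0\<close>.\<close>

lemma kernel_quadratic_bounds:
  fixes K :: "'a::euclidean_space \<Rightarrow> real" and gK :: "'a \<Rightarrow> 'a" and HK :: "'a \<Rightarrow> 'a \<Rightarrow>\<^sub>L 'a"
  assumes nonneg: "\<And>x. 0 \<le> K x" and zero: "K 0 = 0"
    and grad: "\<And>x. (K has_derivative (\<lambda>v. gK x \<bullet> v)) (at x)"
    and hess: "\<And>x. (gK has_derivative blinfun_apply (HK x)) (at x)"
    and lower: "\<And>x v. lam * (norm v)\<^sup>2 \<le> v \<bullet> blinfun_apply (HK x) v"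
    and upper: "\<And>x. norm (HK x) \<le> CK"
  shows "lam / 2 * (norm z)\<^sup>2 \<le> K z" "K z \<le> CK / 2 * (norm z)\<^sup>2"
proof -
  have "(\<lambda>v. gK 0 \<bullet> v) = (\<lambda>h. 0)"
    by (rule has_derivative_local_min[OF grad]) (simp add: nonneg zero)
  then have "gK 0 = 0" by (metis inner_eq_zero_iff)
  define H where "H s = blinfun_apply (HK (s *\<^sub>R z)) z \<bullet> z" for s
  have dK: "DERIV (\<lambda>s. K (s *\<^sub>R z)) s :> gK (s *\<^sub>R z) \<bullet> z" for s
    using has_real_derivative_along_line[OF grad, where t = s and z = z and S = UNIV] by simp
  have dgK: "DERIV (\<lambda>s. gK (s *\<^sub>R z) \<bullet> z) s :> H s" for s
    using has_real_derivative_along_line[OF has_derivative_inner_left[OF hess], where t = s and z = z and S = UNIV]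
    by (simp add: H_def)
  define d where "d m = (if m = 0 then (\<lambda>s. K (s *\<^sub>R z)) else if m = 1 then (\<lambda>s. gK (s *\<^sub>R z) \<bullet> z) else H)"
    for m :: nat
  have "DERIV (d m) s :> d (Suc m) s" if "m < 2" for m s
    using that dK dgK by (cases m) (auto simp: d_def)
  then obtain t where "d 0 1 = d 0 0 / fact 0 + d 1 0 / fact 1 + d 2 t / fact 2"
    using Maclaurin[of 1 2 d "d 0"] by (auto simp: numeral_2_eq_2)
  then have K: "K z = H t / 2" using zero \<open>gK 0 = 0\<close> by (simp add: d_def numeral_2_eq_2)
  have "lam * (norm z)\<^sup>2 \<le> H t" using lower by (simp add: H_def inner_commute)
  then show "lam / 2 * (norm z)\<^sup>2 \<le> K z" using K by simp
  have "H t \<le> norm (blinfun_apply (HK (t *\<^sub>R z)) z) * norm z"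
    unfolding H_def by (rule norm_cauchy_schwarz)
  also have "\<dots> \<le> norm (HK (t *\<^sub>R z)) * norm z * norm z" by (intro mult_right_mono norm_blinfun) auto
  also have "\<dots> \<le> CK * (norm z)\<^sup>2"
    using upper by (simp add: power2_eq_square mult_right_mono mult.assoc)
  finally show "K z \<le> CK / 2 * (norm z)\<^sup>2" using K by simp
qed

lemma hypF_nonneg: "hypF F F' F'' \<Longrightarrow> 0 \<le> r \<Longrightarrow> 0 \<le> F r"
  by (simp add: hypF_def)

lemma hypF_continuous: "hypF F F' F'' \<Longrightarrow> continuous_on {0..} F"
  unfolding hypF_def by (intro DERIV_continuous_on) auto

lemma hypF_DERIV:
  assumes "hypF F F' F''" "r > 0"
  shows "DERIV F r :> F' r" "DERIV F' r :> F'' r"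
proof -
  have "(F has_real_derivative F' r) (at r within {0..})" "(F' has_real_derivative F'' r) (at r within {0..})"
    using assms unfolding hypF_def by auto
  moreover have "at r within {0..} = at r" using assms(2) by (intro at_within_interior) simp
  ultimately show "DERIV F r :> F' r" "DERIV F' r :> F'' r" by simp_all
qed

lemma hypF_deriv_nonneg:
  assumes F: "hypF F F' F''" and r: "0 \<le> r"
  shows "0 \<le> F' r"
proof -
  have "F' 0 \<le> F' r"
  proof (rule DERIV_nonneg_imp_increasing_open[where f = F'])
    show "\<exists>y. DERIV F' x :> y \<and> y \<ge> 0" if "0 < x" "x < r" for x
      using hypF_DERIV(2)[OF F that(1)] F that(1) by (intro exI[of _ "F'' x"]) (simp add: hypF_def less_imp_le)
    have "continuous_on {0..} F'" using F unfolding hypF_def by (intro DERIV_continuous_on) auto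
    then show "continuous_on {0..r} F'" by (rule continuous_on_subset) auto
  qed (use r in simp)
  then show ?thesis using F by (simp add: hypF_def)
qed

text \<open>Taylor's formula at a point \<open>R\<close> beyond which \<open>F''\<close> is bounded below, using \<open>F R, F' R \<ge> 0\<close>.\<close>

lemma hypF_quadratic_growth:
  assumes F: "hypF F F' F''"
  obtains c R where "c > 0" "R > 0" "\<And>r. r \<ge> R \<Longrightarrow> c * (r - R)\<^sup>2 \<le> F r"
proof -
  have "Liminf at_top (\<lambda>r. ereal (F'' r)) > 0" using F by (simp add: hypF_def)
  then obtain c where c: "0 < ereal c" "ereal c < Liminf at_top (\<lambda>r. ereal (F'' r))"
    using ereal_dense2 by blast
  from less_LiminfD[OF c(2)] obtain R0 where R0: "\<And>r. r \<ge> R0 \<Longrightarrow> c < F'' r"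
    unfolding eventually_at_top_linorder by auto
  define R where "R = max R0 1"
  have R: "R > 0" "\<And>r. r \<ge> R \<Longrightarrow> c < F'' r" using R0 by (auto simp: R_def)
  have "c / 2 * (r - R)\<^sup>2 \<le> F r" if r: "r > R" for r
  proof -
    define d where "d m = (if m = 0 then F else if m = 1 then F' else F'')" for m :: nat
    have "DERIV (d m) t :> d (Suc m) t" if "m < 2" "R \<le> t" for m t
    proof -
      have "t > 0" using that R(1) by linarith
      then show ?thesis using that hypF_DERIV[OF F] by (cases m) (auto simp: d_def)
    qed
    then obtain t where "R < t" "d 0 r = d 0 R / fact 0 + d 1 R / fact 1 * (r - R) + d 2 t / fact 2 * (r - R)\<^sup>2"
      using Taylor_up[of 2 d F R r R] r by (auto simp: d_def numeral_2_eq_2)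
    then have t: "R < t" "F r = F R + F' R * (r - R) + F'' t / 2 * (r - R)\<^sup>2"
      by (simp_all add: d_def)
    have "c / 2 * (r - R)\<^sup>2 \<le> F'' t / 2 * (r - R)\<^sup>2"
      using R(2)[of t] t(1) by (intro mult_right_mono) auto
    moreover have "0 \<le> F R + F' R * (r - R)"
      using hypF_nonneg[OF F, of R] hypF_deriv_nonneg[OF F, of R] R(1) r by simp
    ultimately show ?thesis using t(2) by linarith
  qed
  moreover have "c / 2 * (R - R)\<^sup>2 \<le> F R" using hypF_nonneg[OF F, of R] R(1) by simp
  ultimately have "c / 2 * (r - R)\<^sup>2 \<le> F r" if "r \<ge> R" for r
    using that by (cases "r = R") auto
  then show ?thesis using that[of "c / 2" R] c(1) R(1) by simp
qed

lemma superquadratic_if_quadratic_growth: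
  fixes F :: "real \<Rightarrow> real"
  assumes nonneg: "\<And>r. 0 \<le> r \<Longrightarrow> 0 \<le> F r" and c: "c > 0" and R: "R > 0"
    and growth: "\<And>r. r \<ge> R \<Longrightarrow> c * (r - R)\<^sup>2 \<le> F r"
  shows "r \<ge> 0 \<Longrightarrow> r\<^sup>2 \<le> 2 * R * r + 4 / c * F r"
proof -
  assume r: "r \<ge> 0"
  show "r\<^sup>2 \<le> 2 * R * r + 4 / c * F r"
  proof (cases "r \<le> 2 * R")
    case True
    then have "r\<^sup>2 \<le> 2 * R * r" using r by (simp add: power2_eq_square mult_right_mono)
    moreover have "0 \<le> 4 / c * F r" using nonneg[OF r] c by simp
    ultimately show ?thesis by linarith
  next
    case False
    then have "(r / 2)\<^sup>2 \<le> (r - R)\<^sup>2" using r by (intro power_mono) auto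
    then have "c * (r / 2)\<^sup>2 \<le> c * (r - R)\<^sup>2" using c by simp
    also have "\<dots> \<le> F r" using growth[of r] False R by simp
    finally have "c * (r / 2)\<^sup>2 \<le> F r" .
    then have "r\<^sup>2 \<le> 4 / c * F r" using c by (simp add: field_simps power2_eq_square)
    moreover have "0 \<le> 2 * R * r" using R r by simp
    ultimately show ?thesis by linarith
  qed
qed

lemma hypF_superquadratic:
  assumes "hypF F F' F''"
  obtains a b where "0 \<le> b" "\<And>r. 0 \<le> r \<Longrightarrow> r\<^sup>2 \<le> a * r + b * F r"
proof -
  obtain c R where "c > 0" "R > 0" "\<And>r. r \<ge> R \<Longrightarrow> c * (r - R)\<^sup>2 \<le> F r"
    using hypF_quadratic_growth[OF assms] by blast
  then have "r\<^sup>2 \<le> 2 * R * r + 4 / c * F r" if "0 \<le> r" for r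
    using superquadratic_if_quadratic_growth[of F c R r] hypF_nonneg[OF assms] that by blast
  then show ?thesis using that[of "4 / c" "2 * R"] \<open>c > 0\<close> by simp
qed

lemma convex_on_le_if_has_derivative_zero:
  fixes f :: "'a::real_normed_vector \<Rightarrow> real"
  assumes convex: "convex_on S f" and x: "x \<in> S" and y: "y \<in> S"
    and critical: "(f has_derivative (\<lambda>v. 0)) (at x within S)"
  shows "f x \<le> f y"
proof -
  define g where "g t = f (x + t *\<^sub>R (y - x))" for t :: real
  have segment: "x + t *\<^sub>R (y - x) = (1 - t) *\<^sub>R x + t *\<^sub>R y" for t :: real
    by (simp add: algebra_simps)
  have "(\<lambda>t. x + t *\<^sub>R (y - x)) ` {0..1} \<subseteq> S"
    using convex x y unfolding convex_on_def convex_alt segment by auto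
  then have "(f has_derivative (\<lambda>v. 0)) (at (x + 0 *\<^sub>R (y - x)) within (\<lambda>t. x + t *\<^sub>R (y - x)) ` {0..1})"
    using has_derivative_subset[OF critical] by simp
  moreover have "((\<lambda>t. x + t *\<^sub>R (y - x)) has_derivative (\<lambda>t. t *\<^sub>R (y - x))) (at 0 within {0..1})"
    by (auto intro!: derivative_eq_intros)
  ultimately have "(g has_derivative (\<lambda>t. 0)) (at 0 within {0..1})"
    unfolding g_def by (rule has_derivative_in_compose[rotated])
  moreover have "((*) 0 :: real \<Rightarrow> real) = (\<lambda>t. 0)" by auto
  ultimately have "(g has_real_derivative 0) (at 0 within {0..1})"
    by (simp add: has_field_derivative_def)
  then have "((\<lambda>t. (g t - g 0) / (t - 0)) \<longlongrightarrow> 0) (at_right 0)"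
    unfolding has_field_derivative_iff by (simp add: at_within_Icc_at_right)
  moreover have "eventually (\<lambda>t. (g t - g 0) / (t - 0) \<le> f y - f x) (at_right 0)"
    unfolding eventually_at_right[OF zero_less_one]
  proof (intro exI[of _ 1] conjI allI impI)
    fix t :: real assume t: "0 < t" "t < 1"
    have "g t \<le> (1 - t) * f x + t * f y"
      unfolding g_def segment using convex_onD[OF convex, of t x y] t x y by simp
    then have "g t - g 0 \<le> (f y - f x) * t" by (simp add: g_def algebra_simps)
    then show "(g t - g 0) / (t - 0) \<le> f y - f x" using t by (simp add: divide_le_eq)
  qed simp
  ultimately have "0 \<le> f y - f x" by (rule tendsto_upperbound) simp
  then show ?thesis by simp
qed

lemma convex_interaction_nonneg:
  assumes F1: "hypF F1 F1' F1''" and F2: "hypF F2 F2' F2''"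
    and h_d1: "\<forall>p\<in>quadrant. (h has_derivative (\<lambda>v. h1 p * fst v + h2 p * snd v)) (at p within quadrant)"
    and h_axes: "\<forall>p\<in>quadrant. fst p = 0 \<or> snd p = 0 \<longrightarrow> h p = 0 \<and> h1 p = 0 \<and> h2 p = 0"
    and convex: "convex_on quadrant (\<lambda>r. F1 (fst r) + F2 (snd r) + a * h r)"
    and p: "p \<in> quadrant"
  shows "0 \<le> F1 (fst p) + F2 (snd p) + a * h p"
proof -
  have 0: "(0::real \<times> real) \<in> quadrant" by (simp add: quadrant_def zero_prod_def)
  have F10: "F1 0 = 0" "F1' 0 = 0" and F20: "F2 0 = 0" "F2' 0 = 0"
    using F1 F2 unfolding hypF_def by auto
  have h0: "h 0 = 0" "h1 0 = 0" "h2 0 = 0" using h_axes 0 by (auto simp: zero_prod_def)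
  have F1_deriv: "(F1 has_derivative (*) (F1' 0)) (at (fst 0) within fst ` quadrant)"
    using F1 has_derivative_subset[of F1 _ 0 "{0..}" "fst ` quadrant"]
    by (auto simp: hypF_def has_field_derivative_def quadrant_def zero_prod_def)
  have F2_deriv: "(F2 has_derivative (*) (F2' 0)) (at (snd 0) within snd ` quadrant)"
    using F2 has_derivative_subset[of F2 _ 0 "{0..}" "snd ` quadrant"]
    by (auto simp: hypF_def has_field_derivative_def quadrant_def zero_prod_def)
  have "((\<lambda>r. F1 (fst r) + F2 (snd r) + a * h r) has_derivative
      (\<lambda>v. F1' 0 * fst v + F2' 0 * snd v + a * (h1 0 * fst v + h2 0 * snd v))) (at 0 within quadrant)"
    using h_d1 0
    by (intro has_derivative_add has_derivative_mult_right
        has_derivative_in_compose[OF has_derivative_fst[OF has_derivative_ident] F1_deriv]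
        has_derivative_in_compose[OF has_derivative_snd[OF has_derivative_ident] F2_deriv]) auto
  then have "((\<lambda>r. F1 (fst r) + F2 (snd r) + a * h r) has_derivative (\<lambda>v. 0)) (at 0 within quadrant)"
    using F10 F20 h0 by simp
  from convex_on_le_if_has_derivative_zero[OF convex 0 p this]
  show ?thesis using F10 F20 h0 by (simp add: zero_prod_def)
qed

lemma internal_energy_ge_half:
  assumes F1: "hypF F1 F1' F1''" and F2: "hypF F2 F2' F2''"
    and h_d1: "\<forall>p\<in>quadrant. (h has_derivative (\<lambda>v. h1 p * fst v + h2 p * snd v)) (at p within quadrant)"
    and h_axes: "\<forall>p\<in>quadrant. fst p = 0 \<or> snd p = 0 \<longrightarrow> h p = 0 \<and> h1 p = 0 \<and> h2 p = 0"
    and convex: "convex_on quadrant (\<lambda>r. F1 (fst r) + F2 (snd r) + 2 * \<epsilon>0 * h r)"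
    and eps: "0 < \<epsilon>" "\<epsilon> \<le> \<epsilon>0" and p: "p \<in> quadrant"
  shows "(F1 (fst p) + F2 (snd p)) / 2 \<le> F1 (fst p) + F2 (snd p) + \<epsilon> * h p"
proof -
  define S where "S = F1 (fst p) + F2 (snd p)"
  have G: "0 \<le> S + 2 * \<epsilon>0 * h p"
    unfolding S_def by (rule convex_interaction_nonneg[OF F1 F2 h_d1 h_axes convex p])
  have S: "0 \<le> S"
    using hypF_nonneg[OF F1, of "fst p"] hypF_nonneg[OF F2, of "snd p"] p by (auto simp: quadrant_def S_def)
  define l where "l = \<epsilon> / (2 * \<epsilon>0)"
  have l: "0 < l" "l \<le> 1 / 2" using eps by (auto simp: l_def field_simps)
  have "\<epsilon> * h p = l * (S + 2 * \<epsilon>0 * h p) - l * S"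
    using eps by (simp add: l_def field_simps)
  moreover have "0 \<le> l * (S + 2 * \<epsilon>0 * h p)" using l G by simp
  moreover have "l * S \<le> S / 2" using mult_right_mono[OF l(2) S] by simp
  ultimately have "S / 2 \<le> S + \<epsilon> * h p" using S by linarith
  then show ?thesis by (simp add: S_def)
qed

lemma P2_densityD:
  assumes "P2_density f"
  shows "f \<in> borel_measurable borel" "\<And>x. 0 \<le> f x" "integrable lborel f" "(LINT x|lborel. f x) = 1"
    "integrable lborel (\<lambda>x. (norm x)\<^sup>2 * f x)"
  using assms unfolding P2_density_def by auto

lemma borel_measurable_continuous_on_nonneg_comp:
  fixes F :: "real \<Rightarrow> real" and f :: "'a::euclidean_space \<Rightarrow> real"
  assumes F: "continuous_on {0..} F" and f: "f \<in> borel_measurable borel" "\<And>x. 0 \<le> f x"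
  shows "(\<lambda>x. F (f x)) \<in> borel_measurable borel"
proof -
  have "continuous_on UNIV (\<lambda>r. F (max 0 r))"
    by (rule continuous_on_compose2[OF F]) (auto intro!: continuous_intros)
  then have "(\<lambda>x. F (max 0 (f x))) \<in> borel_measurable borel"
    using measurable_compose[OF f(1) borel_measurable_continuous_onI] by blast
  then show ?thesis using f(2) by (simp add: max_absorb2)
qed

lemma borel_measurable_continuous_on_quadrant_comp:
  fixes f g :: "'a::euclidean_space \<Rightarrow> real"
  assumes h: "continuous_on quadrant h" and f: "f \<in> borel_measurable borel" "\<And>x. 0 \<le> f x"
    and g: "g \<in> borel_measurable borel" "\<And>x. 0 \<le> g x"
  shows "(\<lambda>x. h (f x, g x)) \<in> borel_measurable borel"
proof -
  have "continuous_on UNIV (\<lambda>q. h (max 0 (fst q), max 0 (snd q)))"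
    by (rule continuous_on_compose2[OF h]) (auto intro!: continuous_intros simp: quadrant_def)
  then have "(\<lambda>x. h (max 0 (f x), max 0 (g x))) \<in> borel_measurable borel"
    by (intro borel_measurable_continuous_Pair[OF f(1) g(1), where H = "\<lambda>a b. h (max 0 a, max 0 b)"]) simp
  then show ?thesis using f(2) g(2) by (simp add: max_absorb2)
qed

lemma energy_le_imp_integrable:
  assumes "\<bar>energy \<epsilon> F1 F2 h K f g\<bar> \<le> ereal C"
  defines "e \<equiv> \<lambda>x. F1 (f x) + F2 (g x) + \<epsilon> * h (f x, g x) + f x * conv K g x"
  shows "integrable lborel e" "(LINT x|lborel. e x) \<le> C"
proof -
  show "integrable lborel e"
  proof (rule ccontr)
    assume "\<not> integrable lborel e"
    then have "energy \<epsilon> F1 F2 h K f g = \<infinity>" unfolding energy_def Let_def e_def by simp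
    then show False using assms(1) by simp
  qed
  then have "energy \<epsilon> F1 F2 h K f g = ereal (LINT x|lborel. e x)"
    unfolding energy_def Let_def e_def by simp
  then show "(LINT x|lborel. e x) \<le> C" using assms(1) by auto
qed

text \<open>Completing the square: \<open>- 4 m1 \<bullet> m2 \<ge> - D\<^sup>2\<close> whenever \<open>norm (m1 + m2) \<le> D\<close>.\<close>

lemma cross_moment_bound:
  fixes m1 m2 :: "'a::real_inner"
  assumes E: "A1 + A2 + 2 * c * (M1 + M2 - 2 * (m1 \<bullet> m2)) \<le> 2 * C"
    and nonneg: "0 \<le> A1" "0 \<le> A2" "0 \<le> M1" "0 \<le> M2" and c: "c > 0" and D: "norm (m1 + m2) \<le> D"
  shows "A1 + A2 \<le> 2 * C + c * D\<^sup>2" "M1 + M2 \<le> (2 * C + c * D\<^sup>2) / (2 * c)"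
proof -
  define d where "d = m1 + m2"
  have "m1 \<bullet> m2 = m1 \<bullet> d - (norm m1)\<^sup>2" by (simp add: d_def inner_add_right power2_norm_eq_inner)
  moreover have "m1 \<bullet> d \<le> norm m1 * norm d" by (rule norm_cauchy_schwarz)
  moreover have "0 \<le> 2 * (norm m1 - norm d / 2)\<^sup>2" by simp
  moreover have "2 * (norm m1 - norm d / 2)\<^sup>2 = 2 * (norm m1)\<^sup>2 - 2 * (norm m1 * norm d) + (norm d)\<^sup>2 / 2"
    by (simp add: power2_diff power_divide algebra_simps)
  moreover have "(norm d)\<^sup>2 \<le> D\<^sup>2" using D by (intro power_mono) (auto simp: d_def)
  ultimately have "- D\<^sup>2 / 2 \<le> - 2 * (m1 \<bullet> m2)" by linarith
  then have "- c * D\<^sup>2 \<le> - 4 * c * (m1 \<bullet> m2)" using mult_left_mono[of _ _ "2 * c"] c by fastforce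
  moreover have "A1 + A2 + 2 * c * M1 + 2 * c * M2 - 4 * c * (m1 \<bullet> m2) \<le> 2 * C"
    using E by (simp add: algebra_simps)
  moreover have "0 \<le> 2 * c * M1" "0 \<le> 2 * c * M2" using nonneg c by auto
  ultimately have "A1 + A2 \<le> 2 * C + c * D\<^sup>2" "2 * c * M1 + 2 * c * M2 \<le> 2 * C + c * D\<^sup>2"
    using nonneg by linarith+
  then show "A1 + A2 \<le> 2 * C + c * D\<^sup>2" "M1 + M2 \<le> (2 * C + c * D\<^sup>2) / (2 * c)"
    using c by (simp_all add: field_simps)
qed

lemma square_integral_le:
  fixes \<rho> :: "'a::euclidean_space \<Rightarrow> real"
  assumes P: "P2_density \<rho>" and superquadratic: "\<And>r. 0 \<le> r \<Longrightarrow> r\<^sup>2 \<le> a * r + b * F r" and b: "0 \<le> b"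
    and F: "integrable lborel (\<lambda>x. F (\<rho> x))" "(LINT x|lborel. F (\<rho> x)) \<le> B"
  shows "integrable lborel (\<lambda>x. (\<rho> x)\<^sup>2)" "(LINT x|lborel. (\<rho> x)\<^sup>2) \<le> \<bar>a\<bar> + b * B"
proof -
  note \<rho> = P2_densityD[OF P]
  have majorant: "integrable lborel (\<lambda>x. \<bar>a\<bar> * \<rho> x + b * F (\<rho> x))" using \<rho> F by auto
  have le: "(\<rho> x)\<^sup>2 \<le> \<bar>a\<bar> * \<rho> x + b * F (\<rho> x)" for x
    using superquadratic[OF \<rho>(2)[of x]] mult_right_mono[OF abs_ge_self \<rho>(2)[of x], of a] by linarith
  show square: "integrable lborel (\<lambda>x. (\<rho> x)\<^sup>2)"
    by (rule integrable_nonneg_le[OF majorant]) (simp_all add: borel_measurable_power \<rho>(1) le)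
  have "(LINT x|lborel. (\<rho> x)\<^sup>2) \<le> (LINT x|lborel. \<bar>a\<bar> * \<rho> x + b * F (\<rho> x))"
    using square majorant le by (intro integral_mono) auto
  also have "\<dots> = \<bar>a\<bar> + b * (LINT x|lborel. F (\<rho> x))" using \<rho> F by simp
  also have "\<dots> \<le> \<bar>a\<bar> + b * B" using b F by (simp add: mult_left_mono)
  finally show "(LINT x|lborel. (\<rho> x)\<^sup>2) \<le> \<bar>a\<bar> + b * B" .
qed

locale coercive_energy =
  fixes \<epsilon> :: real and F1 F2 :: "real \<Rightarrow> real" and h :: "real \<times> real \<Rightarrow> real"
    and K :: "'a::euclidean_space \<Rightarrow> real" and cK CK :: real
  assumes K_continuous: "continuous_on UNIV K"
    and K_lower: "\<And>z. cK * (norm z)\<^sup>2 \<le> K z" and cK_pos: "0 < cK"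
    and K_upper: "\<And>z. K z \<le> CK * (norm z)\<^sup>2"
    and F1_nonneg: "\<And>r. 0 \<le> r \<Longrightarrow> 0 \<le> F1 r" and F1_continuous: "continuous_on {0..} F1"
    and F2_nonneg: "\<And>r. 0 \<le> r \<Longrightarrow> 0 \<le> F2 r" and F2_continuous: "continuous_on {0..} F2"
    and F1_superquadratic: "\<exists>a b. 0 \<le> b \<and> (\<forall>r\<ge>0. r\<^sup>2 \<le> a * r + b * F1 r)"
    and F2_superquadratic: "\<exists>a b. 0 \<le> b \<and> (\<forall>r\<ge>0. r\<^sup>2 \<le> a * r + b * F2 r)"
    and h_continuous: "continuous_on quadrant h"
    and internal_ge_half: "\<And>p. p \<in> quadrant \<Longrightarrow>
      (F1 (fst p) + F2 (snd p)) / 2 \<le> F1 (fst p) + F2 (snd p) + \<epsilon> * h p"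
begin

lemma K_nonneg: "0 \<le> K z"
proof -
  have "0 \<le> cK * (norm z)\<^sup>2" using cK_pos by simp
  then show ?thesis using K_lower[of z] by linarith
qed

lemma CK_nonneg: "0 \<le> CK"
proof -
  obtain b :: 'a where "b \<in> Basis" using nonempty_Basis by blast
  then show ?thesis using K_nonneg[of b] K_upper[of b] by simp
qed

lemma conv_ge_quadratic:
  assumes P: "P2_density \<rho>"
  shows "cK * ((norm x)\<^sup>2 - 2 * (x \<bullet> moment1 \<rho>) + (LINT y|lborel. (norm y)\<^sup>2 * \<rho> y)) \<le> conv K \<rho> x"
proof -
  note \<rho> = P2_densityD[OF P]
  define q where "q y = cK * ((norm x)\<^sup>2 * \<rho> y - 2 * (\<rho> y * (x \<bullet> y)) + (norm y)\<^sup>2 * \<rho> y)" for y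
  define B where "B y = 2 * CK * ((norm x)\<^sup>2 * \<rho> y + (norm y)\<^sup>2 * \<rho> y)" for y
  have first: "integrable lborel (\<lambda>y. \<rho> y * (x \<bullet> y))" "(LINT y|lborel. \<rho> y * (x \<bullet> y)) = x \<bullet> moment1 \<rho>"
    using inner_first_moment[OF \<rho>(1,2,3,5), of x] by (simp_all add: inner_commute)
  have square: "(norm (x - y))\<^sup>2 = (norm x)\<^sup>2 - 2 * (x \<bullet> y) + (norm y)\<^sup>2" for y
    by (simp add: power2_norm_eq_inner inner_diff_left inner_diff_right inner_commute)
  have K_upper': "K (x - y) * \<rho> y \<le> B y" for y
  proof -
    have "(norm (x - y))\<^sup>2 \<le> (norm x + norm y)\<^sup>2" by (intro power_mono norm_triangle_ineq4) auto
    also have "\<dots> \<le> 2 * ((norm x)\<^sup>2 + (norm y)\<^sup>2)"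
      using sum_squares_bound[of "norm x" "norm y"] by (simp add: power2_sum)
    finally have "CK * (norm (x - y))\<^sup>2 \<le> CK * (2 * ((norm x)\<^sup>2 + (norm y)\<^sup>2))"
      by (rule mult_left_mono[OF _ CK_nonneg])
    then have "K (x - y) \<le> CK * (2 * ((norm x)\<^sup>2 + (norm y)\<^sup>2))"
      using K_upper[of "x - y"] by linarith
    then have "K (x - y) * \<rho> y \<le> CK * (2 * ((norm x)\<^sup>2 + (norm y)\<^sup>2)) * \<rho> y"
      using \<rho>(2)[of y] by (rule mult_right_mono)
    then show ?thesis by (simp add: B_def algebra_simps)
  qed
  have K_lower': "q y \<le> K (x - y) * \<rho> y" for y
    using mult_right_mono[OF K_lower[of "x - y"] \<rho>(2)[of y]] unfolding square by (simp add: q_def algebra_simps)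
  have "(\<lambda>y. K (x - y)) \<in> borel_measurable borel"
    by (rule measurable_compose[OF _ borel_measurable_continuous_onI[OF K_continuous]]) simp
  then have "(\<lambda>y. K (x - y) * \<rho> y) \<in> borel_measurable lborel" using \<rho>(1) by simp
  moreover have "0 \<le> K (x - y) * \<rho> y" for y using K_nonneg \<rho>(2) by simp
  moreover have "integrable lborel B" using \<rho> unfolding B_def by simp
  ultimately have "integrable lborel (\<lambda>y. K (x - y) * \<rho> y)"
    using integrable_nonneg_le[of lborel B "\<lambda>y. K (x - y) * \<rho> y"] K_upper' by blast
  then have "(LINT y|lborel. q y) \<le> conv K \<rho> x"
    unfolding conv_def using \<rho> first K_lower' by (intro integral_mono) (simp_all add: q_def)
  moreover have "(LINT y|lborel. q y)
      = cK * ((norm x)\<^sup>2 - 2 * (x \<bullet> moment1 \<rho>) + (LINT y|lborel. (norm y)\<^sup>2 * \<rho> y))"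
    using \<rho> first by (simp add: q_def)
  ultimately show ?thesis by simp
qed

lemma integrable_energy_parts:
  assumes P1: "P2_density \<rho>1" and P2: "P2_density \<rho>2"
    and e: "integrable lborel (\<lambda>x. F1 (\<rho>1 x) + F2 (\<rho>2 x) + \<epsilon> * h (\<rho>1 x, \<rho>2 x) + \<rho>1 x * conv K \<rho>2 x)"
  shows "integrable lborel (\<lambda>x. F1 (\<rho>1 x) + F2 (\<rho>2 x) + \<epsilon> * h (\<rho>1 x, \<rho>2 x))"
    "integrable lborel (\<lambda>x. \<rho>1 x * conv K \<rho>2 x)"
    "integrable lborel (\<lambda>x. F1 (\<rho>1 x))" "integrable lborel (\<lambda>x. F2 (\<rho>2 x))"
proof -
  note \<rho>1 = P2_densityD[OF P1] and \<rho>2 = P2_densityD[OF P2]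
  define W where "W x = F1 (\<rho>1 x) + F2 (\<rho>2 x) + \<epsilon> * h (\<rho>1 x, \<rho>2 x)" for x
  define S where "S x = F1 (\<rho>1 x) + F2 (\<rho>2 x)" for x
  define I where "I x = \<rho>1 x * conv K \<rho>2 x" for x
  have F1_borel: "(\<lambda>x. F1 (\<rho>1 x)) \<in> borel_measurable borel"
    by (rule borel_measurable_continuous_on_nonneg_comp[OF F1_continuous \<rho>1(1,2)])
  have F2_borel: "(\<lambda>x. F2 (\<rho>2 x)) \<in> borel_measurable borel"
    by (rule borel_measurable_continuous_on_nonneg_comp[OF F2_continuous \<rho>2(1,2)])
  have "(\<lambda>x. h (\<rho>1 x, \<rho>2 x)) \<in> borel_measurable borel"
    by (rule borel_measurable_continuous_on_quadrant_comp[OF h_continuous \<rho>1(1,2) \<rho>2(1,2)])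
  then have W_borel: "W \<in> borel_measurable lborel" unfolding W_def using F1_borel F2_borel by simp
  have S_le_W: "S x / 2 \<le> W x" for x
    using internal_ge_half[of "(\<rho>1 x, \<rho>2 x)"] \<rho>1(2) \<rho>2(2) by (simp add: quadrant_def S_def W_def)
  have S_nonneg: "0 \<le> S x" for x using F1_nonneg[OF \<rho>1(2)] F2_nonneg[OF \<rho>2(2)] by (simp add: S_def)
  have I_nonneg: "0 \<le> I x" for x
  proof -
    have "0 \<le> conv K \<rho>2 x" unfolding conv_def by (rule integral_nonneg_AE) (use K_nonneg \<rho>2(2) in simp)
    then show ?thesis using \<rho>1(2)[of x] by (simp add: I_def)
  qed
  have e_eq: "(\<lambda>x. F1 (\<rho>1 x) + F2 (\<rho>2 x) + \<epsilon> * h (\<rho>1 x, \<rho>2 x) + \<rho>1 x * conv K \<rho>2 x) = (\<lambda>x. W x + I x)"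
    by (simp add: W_def I_def)
  have "(\<lambda>x. (W x + I x) - W x) \<in> borel_measurable lborel"
    using borel_measurable_integrable[OF e[unfolded e_eq]] W_borel by (rule borel_measurable_diff)
  then have "I \<in> borel_measurable lborel" by simp
  have W_nonneg: "0 \<le> W x" for x using S_le_W[of x] S_nonneg[of x] by linarith
  have I: "integrable lborel I"
    using W_nonneg I_nonneg by (intro integrable_nonneg_le[OF e[unfolded e_eq] \<open>I \<in> _\<close>]) auto
  have "integrable lborel (\<lambda>x. (W x + I x) - I x)"
    using e[unfolded e_eq] I by (rule Bochner_Integration.integrable_diff)
  then have W: "integrable lborel W" by simp
  have "integrable lborel (\<lambda>x. 2 * W x)" using W by simp
  moreover have "S \<in> borel_measurable lborel" unfolding S_def using F1_borel F2_borel by simp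
  moreover note S_nonneg
  moreover have "S x \<le> 2 * W x" for x using S_le_W[of x] by linarith
  ultimately have S: "integrable lborel S" by (rule integrable_nonneg_le)
  show "integrable lborel (\<lambda>x. F1 (\<rho>1 x) + F2 (\<rho>2 x) + \<epsilon> * h (\<rho>1 x, \<rho>2 x))"
    "integrable lborel (\<lambda>x. \<rho>1 x * conv K \<rho>2 x)"
    using W I unfolding W_def[abs_def] I_def[abs_def] by auto
  show "integrable lborel (\<lambda>x. F1 (\<rho>1 x))" "integrable lborel (\<lambda>x. F2 (\<rho>2 x))"
    using F1_borel F2_borel F1_nonneg[OF \<rho>1(2)] F2_nonneg[OF \<rho>2(2)]
    by (intro integrable_nonneg_le[OF S]; simp add: S_def)+
qed

lemma energy_lower_bound:
  assumes P1: "P2_density \<rho>1" and P2: "P2_density \<rho>2"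
    and E: "\<bar>energy \<epsilon> F1 F2 h K \<rho>1 \<rho>2\<bar> \<le> ereal C"
  shows "(LINT x|lborel. F1 (\<rho>1 x)) + (LINT x|lborel. F2 (\<rho>2 x))
      + 2 * cK * ((LINT x|lborel. (norm x)\<^sup>2 * \<rho>1 x) + (LINT x|lborel. (norm x)\<^sup>2 * \<rho>2 x)
        - 2 * (moment1 \<rho>1 \<bullet> moment1 \<rho>2)) \<le> 2 * C"
proof -
  note \<rho>1 = P2_densityD[OF P1] and \<rho>2 = P2_densityD[OF P2]
  note e = energy_le_imp_integrable[OF E]
  note parts = integrable_energy_parts[OF P1 P2 e(1)]
  define M2 where "M2 = (LINT y|lborel. (norm y)\<^sup>2 * \<rho>2 y)"
  define q where "q x = cK * ((norm x)\<^sup>2 * \<rho>1 x - 2 * (\<rho>1 x * (x \<bullet> moment1 \<rho>2)) + M2 * \<rho>1 x)" for x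
  have "(LINT x|lborel. F1 (\<rho>1 x) + F2 (\<rho>2 x) + \<epsilon> * h (\<rho>1 x, \<rho>2 x) + \<rho>1 x * conv K \<rho>2 x)
      = (LINT x|lborel. F1 (\<rho>1 x) + F2 (\<rho>2 x) + \<epsilon> * h (\<rho>1 x, \<rho>2 x)) + (LINT x|lborel. \<rho>1 x * conv K \<rho>2 x)"
    by (rule Bochner_Integration.integral_add[OF parts(1,2)])
  moreover have "((LINT x|lborel. F1 (\<rho>1 x)) + (LINT x|lborel. F2 (\<rho>2 x))) / 2
      \<le> (LINT x|lborel. F1 (\<rho>1 x) + F2 (\<rho>2 x) + \<epsilon> * h (\<rho>1 x, \<rho>2 x))"
  proof -
    have "(LINT x|lborel. (F1 (\<rho>1 x) + F2 (\<rho>2 x)) / 2)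
        \<le> (LINT x|lborel. F1 (\<rho>1 x) + F2 (\<rho>2 x) + \<epsilon> * h (\<rho>1 x, \<rho>2 x))"
      using parts internal_ge_half \<rho>1(2) \<rho>2(2) by (intro integral_mono) (auto simp: quadrant_def)
    then show ?thesis using parts(3,4) by simp
  qed
  moreover have "(LINT x|lborel. q x) \<le> (LINT x|lborel. \<rho>1 x * conv K \<rho>2 x)"
  proof (rule integral_mono)
    have "integrable lborel (\<lambda>x. \<rho>1 x * (x \<bullet> moment1 \<rho>2))"
      using inner_first_moment(1)[OF \<rho>1(1,2,3,5)] by simp
    then show "integrable lborel q" unfolding q_def using \<rho>1 by auto
    show "integrable lborel (\<lambda>x. \<rho>1 x * conv K \<rho>2 x)" by (fact parts(2))
    show "q x \<le> \<rho>1 x * conv K \<rho>2 x" for x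
      using mult_left_mono[OF conv_ge_quadratic[OF P2, of x] \<rho>1(2)[of x]]
      by (simp add: q_def M2_def algebra_simps)
  qed
  moreover have "(LINT x|lborel. q x)
      = cK * ((LINT x|lborel. (norm x)\<^sup>2 * \<rho>1 x) - 2 * (moment1 \<rho>1 \<bullet> moment1 \<rho>2) + M2)"
    using inner_first_moment[OF \<rho>1(1,2,3,5), of "moment1 \<rho>2"] \<rho>1 by (simp add: q_def)
  ultimately show ?thesis using e(2) by (simp add: M2_def algebra_simps)
qed

lemma square_and_moment_bounds_if_energy_le:
  assumes P1: "P2_density \<rho>1" and P2: "P2_density \<rho>2"
    and E: "\<bar>energy \<epsilon> F1 F2 h K \<rho>1 \<rho>2\<bar> \<le> ereal C"
    and D: "norm (moment1 \<rho>1 + moment1 \<rho>2) \<le> D"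
    and ab1: "0 \<le> b1" "\<And>r. 0 \<le> r \<Longrightarrow> r\<^sup>2 \<le> a1 * r + b1 * F1 r"
    and ab2: "0 \<le> b2" "\<And>r. 0 \<le> r \<Longrightarrow> r\<^sup>2 \<le> a2 * r + b2 * F2 r"
  defines "B \<equiv> 2 * C + cK * D\<^sup>2"
  shows "integrable lborel (\<lambda>x. (\<rho>1 x)\<^sup>2)" "(LINT x|lborel. (\<rho>1 x)\<^sup>2) \<le> \<bar>a1\<bar> + b1 * B"
    "integrable lborel (\<lambda>x. (\<rho>2 x)\<^sup>2)" "(LINT x|lborel. (\<rho>2 x)\<^sup>2) \<le> \<bar>a2\<bar> + b2 * B"
    "(LINT x|lborel. (norm x)\<^sup>2 * \<rho>1 x) \<le> B / (2 * cK)"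
    "(LINT x|lborel. (norm x)\<^sup>2 * \<rho>2 x) \<le> B / (2 * cK)"
proof -
  note \<rho>1 = P2_densityD[OF P1] and \<rho>2 = P2_densityD[OF P2]
  note parts = integrable_energy_parts[OF P1 P2 energy_le_imp_integrable(1)[OF E]]
  have nonneg: "0 \<le> (LINT x|lborel. F1 (\<rho>1 x))" "0 \<le> (LINT x|lborel. F2 (\<rho>2 x))"
    "0 \<le> (LINT x|lborel. (norm x)\<^sup>2 * \<rho>1 x)" "0 \<le> (LINT x|lborel. (norm x)\<^sup>2 * \<rho>2 x)"
    by (intro integral_nonneg_AE AE_I2; simp add: F1_nonneg F2_nonneg \<rho>1(2) \<rho>2(2))+
  note cross = cross_moment_bound[OF energy_lower_bound[OF P1 P2 E] nonneg cK_pos D]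
  have "(LINT x|lborel. F1 (\<rho>1 x)) \<le> B" "(LINT x|lborel. F2 (\<rho>2 x)) \<le> B"
    using cross(1) nonneg(1,2) by (simp_all add: B_def)
  then show "integrable lborel (\<lambda>x. (\<rho>1 x)\<^sup>2)" "(LINT x|lborel. (\<rho>1 x)\<^sup>2) \<le> \<bar>a1\<bar> + b1 * B"
    "integrable lborel (\<lambda>x. (\<rho>2 x)\<^sup>2)" "(LINT x|lborel. (\<rho>2 x)\<^sup>2) \<le> \<bar>a2\<bar> + b2 * B"
    using square_integral_le[OF P1 ab1(2) ab1(1) parts(3)] square_integral_le[OF P2 ab2(2) ab2(1) parts(4)]
    by blast+
  show "(LINT x|lborel. (norm x)\<^sup>2 * \<rho>1 x) \<le> B / (2 * cK)"
    "(LINT x|lborel. (norm x)\<^sup>2 * \<rho>2 x) \<le> B / (2 * cK)"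
    using cross(2) nonneg(3,4) by (simp_all add: B_def)
qed

lemma bounded_energy_imp_bounded_density_seq:
  assumes P: "\<And>n. P2_density (\<rho>1 n)" "\<And>n. P2_density (\<rho>2 n)"
    and E: "\<And>n. \<bar>energy \<epsilon> F1 F2 h K (\<rho>1 n) (\<rho>2 n)\<bar> \<le> ereal C"
    and D: "\<And>n. norm (moment1 (\<rho>1 n) + moment1 (\<rho>2 n)) \<le> D"
  obtains Q M where "bounded_density_seq \<rho>1 Q M" "bounded_density_seq \<rho>2 Q M"
proof -
  obtain a1 b1 where ab1: "0 \<le> b1" "\<And>r. 0 \<le> r \<Longrightarrow> r\<^sup>2 \<le> a1 * r + b1 * F1 r"
    using F1_superquadratic by blast
  obtain a2 b2 where ab2: "0 \<le> b2" "\<And>r. 0 \<le> r \<Longrightarrow> r\<^sup>2 \<le> a2 * r + b2 * F2 r"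
    using F2_superquadratic by blast
  define B where "B = 2 * C + cK * D\<^sup>2"
  define Q where "Q = max (\<bar>a1\<bar> + b1 * B) (\<bar>a2\<bar> + b2 * B)"
  note bounds = square_and_moment_bounds_if_energy_le[OF P(1) P(2) E D ab1 ab2, folded B_def]
  have Q: "\<bar>a1\<bar> + b1 * B \<le> Q" "\<bar>a2\<bar> + b2 * B \<le> Q" by (simp_all add: Q_def)
  note \<rho>1 = P2_densityD[OF P(1)] and \<rho>2 = P2_densityD[OF P(2)]
  have "bounded_density_seq \<rho>1 Q (B / (2 * cK))"
    by (rule bounded_density_seq.intro[OF \<rho>1(1-4) bounds(1) order_trans[OF bounds(2) Q(1)] \<rho>1(5) bounds(5)])
  moreover have "bounded_density_seq \<rho>2 Q (B / (2 * cK))"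
    by (rule bounded_density_seq.intro[OF \<rho>2(1-4) bounds(3) order_trans[OF bounds(4) Q(2)] \<rho>2(5) bounds(6)])
  ultimately show ?thesis by (rule that)
qed

lemma bounded_energy_X0_weakly_convergent_subseq:
  assumes P: "\<And>n. P2_density (\<rho>1 n)" "\<And>n. P2_density (\<rho>2 n)"
    and E: "\<And>n. \<bar>energy \<epsilon> F1 F2 h K (\<rho>1 n) (\<rho>2 n)\<bar> \<le> ereal C"
    and moments: "(\<lambda>n. moment1 (\<rho>1 n) + moment1 (\<rho>2 n)) \<longlonglongrightarrow> 0"
  shows "\<exists>s \<sigma>1 \<sigma>2. strict_mono s \<and> X0 \<sigma>1 \<sigma>2 \<and> weak_L1_conv (\<rho>1 \<circ> s) \<sigma>1 \<and> weak_L1_conv (\<rho>2 \<circ> s) \<sigma>2"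
proof -
  have "Bseq (\<lambda>n. moment1 (\<rho>1 n) + moment1 (\<rho>2 n))"
    using moments by (intro convergent_imp_Bseq convergentI)
  then obtain D where D: "\<And>n. norm (moment1 (\<rho>1 n) + moment1 (\<rho>2 n)) \<le> D"
    unfolding Bseq_def by blast
  obtain Q M where "bounded_density_seq \<rho>1 Q M" "bounded_density_seq \<rho>2 Q M"
    by (rule bounded_energy_imp_bounded_density_seq[OF P E D])
  then show ?thesis using moments by (rule X0_weakly_convergent_subseq)
qed

end

lemma coercive_energy_if_standing_hypotheses:
  fixes K :: "'a::euclidean_space \<Rightarrow> real" and gK :: "'a \<Rightarrow> 'a" and HK :: "'a \<Rightarrow> 'a \<Rightarrow>\<^sub>L 'a"
  assumes K_nonneg: "\<forall>x. 0 \<le> K x" and K_zero: "K 0 = 0"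
    and K_grad: "\<forall>x. (K has_derivative (\<lambda>v. gK x \<bullet> v)) (at x)"
    and K_hess: "\<forall>x. (gK has_derivative blinfun_apply (HK x)) (at x)"
    and lambda_pos: "lam > 0"
    and K_convex: "\<forall>x v. v \<bullet> blinfun_apply (HK x) v \<ge> lam * (norm v)\<^sup>2"
    and K_bound: "\<forall>x. norm (HK x) \<le> CK"
    and F1: "hypF F1 F1' F1''" and F2: "hypF F2 F2' F2''"
    and h_d1: "\<forall>p\<in>quadrant. (h has_derivative (\<lambda>v. h1 p * fst v + h2 p * snd v)) (at p within quadrant)"
    and h_axes: "\<forall>p\<in>quadrant. fst p = 0 \<or> snd p = 0 \<longrightarrow> h p = 0 \<and> h1 p = 0 \<and> h2 p = 0"
    and eps0_convex: "convex_on quadrant (\<lambda>r. F1 (fst r) + F2 (snd r) + 2 * \<epsilon>0 * h r)"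
    and eps: "0 < \<epsilon>" "\<epsilon> \<le> \<epsilon>0"
  shows "coercive_energy \<epsilon> F1 F2 h K (lam / 2) (CK / 2)"
proof
  show "continuous_on UNIV K"
    using K_grad by (intro has_derivative_continuous_on) auto
  show "lam / 2 * (norm z)\<^sup>2 \<le> K z" "K z \<le> CK / 2 * (norm z)\<^sup>2" for z
    using kernel_quadratic_bounds[of K gK HK lam CK z] K_nonneg K_zero K_grad K_hess K_convex K_bound
    by auto
  show "0 < lam / 2" using lambda_pos by simp
  show "continuous_on quadrant h"
    using h_d1 by (intro has_derivative_continuous_on) auto
  show "(F1 (fst p) + F2 (snd p)) / 2 \<le> F1 (fst p) + F2 (snd p) + \<epsilon> * h p" if "p \<in> quadrant" for p
    using internal_energy_ge_half[OF F1 F2 h_d1 h_axes eps0_convex eps that] .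
  show "\<exists>a b. 0 \<le> b \<and> (\<forall>r\<ge>0. r\<^sup>2 \<le> a * r + b * F1 r)"
    by (rule hypF_superquadratic[OF F1]) blast
  show "\<exists>a b. 0 \<le> b \<and> (\<forall>r\<ge>0. r\<^sup>2 \<le> a * r + b * F2 r)"
    by (rule hypF_superquadratic[OF F2]) blast
qed (use hypF_nonneg[OF F1] hypF_nonneg[OF F2] hypF_continuous[OF F1] hypF_continuous[OF F2] in auto)

theorem lemma3p1:
  fixes K :: "'a::euclidean_space \<Rightarrow> real" and gK :: "'a \<Rightarrow> 'a"
    and HK :: "'a \<Rightarrow> 'a \<Rightarrow>\<^sub>L 'a"
    and lam CK :: real
    and F1 F1' F1'' F2 F2' F2'' :: "real \<Rightarrow> real"
    and h h1 h2 h11 h12 h21 h22 :: "real \<times> real \<Rightarrow> real"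
    and \<kappa>11 \<kappa>12 \<kappa>21 \<kappa>22 :: real
    and \<epsilon>0 \<epsilon> :: real
  assumes K_nonneg: "\<forall>x. 0 \<le> K x"
    and K_radial: "\<forall>x y. norm x = norm y \<longrightarrow> K x = K y"
    and K_zero: "K 0 = 0"
    and K_grad: "\<forall>x. (K has_derivative (\<lambda>v. gK x \<bullet> v)) (at x)"
    and K_hess: "\<forall>x. (gK has_derivative blinfun_apply (HK x)) (at x)"
    and K_C2: "continuous_on UNIV HK"
    and lambda_pos: "lam > 0"
    and K_convex: "\<forall>x v. v \<bullet> blinfun_apply (HK x) v \<ge> lam * (norm v)\<^sup>2"
    and K_bound: "\<forall>x. norm (HK x) \<le> CK"
    and F1: "hypF F1 F1' F1''"
    and F2: "hypF F2 F2' F2''"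
    and h_d1: "\<forall>p\<in>quadrant. (h has_derivative (\<lambda>v. h1 p * fst v + h2 p * snd v)) (at p within quadrant)"
    and h_d2a: "\<forall>p\<in>quadrant. (h1 has_derivative (\<lambda>v. h11 p * fst v + h12 p * snd v)) (at p within quadrant)"
    and h_d2b: "\<forall>p\<in>quadrant. (h2 has_derivative (\<lambda>v. h21 p * fst v + h22 p * snd v)) (at p within quadrant)"
    and h_C2: "continuous_on quadrant h11 \<and> continuous_on quadrant h12 \<and>
               continuous_on quadrant h21 \<and> continuous_on quadrant h22"
    and h_axes: "\<forall>p\<in>quadrant. fst p = 0 \<or> snd p = 0 \<longrightarrow> h p = 0 \<and> h1 p = 0 \<and> h2 p = 0"
    and theta11: "\<kappa>11 > 0 \<and> hyp_theta h11 F1' F2' F1'' fst fst \<kappa>11"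
    and theta12: "\<kappa>12 > 0 \<and> hyp_theta h12 F1' F2' F2'' snd fst \<kappa>12"
    and theta21: "\<kappa>21 > 0 \<and> hyp_theta h21 F1' F2' F1'' fst snd \<kappa>21"
    and theta22: "\<kappa>22 > 0 \<and> hyp_theta h22 F1' F2' F2'' snd snd \<kappa>22"
    and eps0: "\<epsilon>0 > 0"
    and eps0_convex: "convex_on quadrant (\<lambda>r. F1 (fst r) + F2 (snd r) + 2 * \<epsilon>0 * h r)"
    and eps: "0 < \<epsilon>" "\<epsilon> \<le> \<epsilon>0"
  shows
    "(\<forall>(\<rho>1 :: nat \<Rightarrow> 'a \<Rightarrow> real) \<rho>2 C.
        (\<forall>n. X0 (\<rho>1 n) (\<rho>2 n)) \<and> (\<forall>n. \<bar>energy \<epsilon> F1 F2 h K (\<rho>1 n) (\<rho>2 n)\<bar> \<le> ereal C)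
        \<longrightarrow> (\<exists>s \<sigma>1 \<sigma>2. strict_mono s \<and> X0 \<sigma>1 \<sigma>2 \<and>
               weak_L1_conv (\<rho>1 \<circ> s) \<sigma>1 \<and> weak_L1_conv (\<rho>2 \<circ> s) \<sigma>2)) \<and>
     (\<forall>(\<rho>1 :: nat \<Rightarrow> 'a \<Rightarrow> real) \<rho>2 C.
        (\<forall>n. P2_density (\<rho>1 n) \<and> P2_density (\<rho>2 n)) \<and>
        (\<forall>n. \<bar>energy \<epsilon> F1 F2 h K (\<rho>1 n) (\<rho>2 n)\<bar> \<le> ereal C) \<and>
        (\<lambda>n. moment1 (\<rho>1 n) + moment1 (\<rho>2 n)) \<longlonglongrightarrow> 0
        \<longrightarrow> (\<exists>s \<sigma>1 \<sigma>2. strict_mono s \<and> X0 \<sigma>1 \<sigma>2 \<and>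
               weak_L1_conv (\<rho>1 \<circ> s) \<sigma>1 \<and> weak_L1_conv (\<rho>2 \<circ> s) \<sigma>2))"
proof -
  interpret coercive_energy \<epsilon> F1 F2 h K "lam / 2" "CK / 2"
    by (rule coercive_energy_if_standing_hypotheses[OF K_nonneg K_zero K_grad K_hess lambda_pos K_convex
          K_bound F1 F2 h_d1 h_axes eps0_convex eps])
  show ?thesis
  proof (intro conjI allI impI)
    fix \<rho>1 \<rho>2 :: "nat \<Rightarrow> 'a \<Rightarrow> real" and C
    assume "(\<forall>n. X0 (\<rho>1 n) (\<rho>2 n)) \<and> (\<forall>n. \<bar>energy \<epsilon> F1 F2 h K (\<rho>1 n) (\<rho>2 n)\<bar> \<le> ereal C)"
    then show "\<exists>s \<sigma>1 \<sigma>2. strict_mono s \<and> X0 \<sigma>1 \<sigma>2 \<and> weak_L1_conv (\<rho>1 \<circ> s) \<sigma>1 \<and> weak_L1_conv (\<rho>2 \<circ> s) \<sigma>2"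
      by (intro bounded_energy_X0_weakly_convergent_subseq) (auto simp: X0_def)
  next
    fix \<rho>1 \<rho>2 :: "nat \<Rightarrow> 'a \<Rightarrow> real" and C
    assume "(\<forall>n. P2_density (\<rho>1 n) \<and> P2_density (\<rho>2 n)) \<and>
      (\<forall>n. \<bar>energy \<epsilon> F1 F2 h K (\<rho>1 n) (\<rho>2 n)\<bar> \<le> ereal C) \<and>
      (\<lambda>n. moment1 (\<rho>1 n) + moment1 (\<rho>2 n)) \<longlonglongrightarrow> 0"
    then show "\<exists>s \<sigma>1 \<sigma>2. strict_mono s \<and> X0 \<sigma>1 \<sigma>2 \<and> weak_L1_conv (\<rho>1 \<circ> s) \<sigma>1 \<and> weak_L1_conv (\<rho>2 \<circ> s) \<sigma>2"
      by (intro bounded_energy_X0_weakly_convergent_subseq) auto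
  qed
qed

end
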